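(* Let $\Delta\in\mathbb F^{m\times m}$ be a connection matrix with column/row partition $J_0,\dots,J_b$. Let $\Delta^0,\dots,\Delta^m$ be produced by the Incremental Sweeping Algorithm (ISA) applied to $\Delta$ and $\widetilde\Delta^0,\dots,\widetilde\Delta^{m-1}$ by the Row Cancellation Algorithm (RCA) applied to $\Delta$. Then for every $r=1,\dots,m-1$, the set of positions marked as primary pivots at iteration $r$ is the same in both algorithms, and for every position $(i,j)$ marked as a primary pivot at some iteration $\le r$ one has $\Delta^r_{ij}=\widetilde\Delta^r_{ij}$.
   Context: Throughout, $\mathbb F$ is a field and $m\ge1$. $U^{pq}$ is the $m\times m$ matrix whose only nonzero entry is a $1$ in position $(p,q)$. Superscripts on matrices are indices, not powers. A connection matrix (over $\mathbb F$) is a matrix $\Delta\in\mathbb F^{m\times m}$ together with a partition $\{1,\dots,m\}=J_0\sqcup\cdots\sqcup J_b$ (the column/row partition; the $J_k$ need not consist of consecutive integers) such that $\Delta$ is upper triangular, $\Delta\Delta=0$, and $\Delta_{ij}=0$ unless $i<j$ and $(i,j)\in\bigcup_{k=1}^bJ_{k-1}\times J_k$. For $1\le r\le m-1$ the $r$-th diagonal is $\{(j-r,j):r<j\le m\}$. Incremental Sweeping Algorithm (ISA) applied to a connection matrix $\Delta$: set $\Delta^0=\Delta^1=\Delta$. For $r=1,\dots,m-1$ in turn: (Markup) for every position $(j-r,j)$ on the $r$-th diagonal with $\Delta^r_{j-r,j}\ne0$ such that no position in column $j$ was marked as a primary pivot at an earlier iteration: if some position $(j-r,p)$ of row $j-r$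 was marked as a primary pivot at an earlier iteration, mark $(j-r,j)$ as a change-of-basis pivot of iteration $r$; otherwise mark $(j-r,j)$ permanently as a primary pivot (marked at iteration $r$). (Update) Let $T^r=I-\sum \frac{\Delta^r_{j-r,j}}{\Delta^r_{j-r,p}}U^{pj}$, the sum running over all change-of-basis pivots $(j-r,j)$ of iteration $r$, where $(j-r,p)$ is the primary pivot position in row $j-r$; set $\Delta^{r+1}=(T^r)^{-1}\Delta^rT^r$. Row Cancellation Algorithm (RCA) applied to a connection matrix $\Delta$: set $\widetilde\Delta^0=\widetilde\Delta^1=\Delta$. For $r=1,\dots,m-1$ in turn: (Markup) mark permanently as a primary pivot (marked at iteration $r$) every position $(j-r,j)$ on the $r$-th diagonal with $\widetilde\Delta^r_{j-r,j}\ne0$ such that no position of column $j$ was marked as a primary pivot at an earlier iteration. (Update, only for $r\le m-2$) If no position was marked at iteration $r$, put $\widetilde T^r=I$; otherwise let $j_1<\cdots<j_t$ be the columns of the positions marked at iteration $r$, let $\widetilde T^{r,s}=I-\sum_{q=j_s+1}^m\frac{\widetilde\Delta^r_{j_s-r,q}}{\widetilde\Delta^r_{j_s-r,j_s}}U^{j_sq}$ and $\widetilde T^r=\widetilde T^{r,1}\cdots\widetilde T^{r,t}$. Set $\widetilde\Delta^{r+1}=(\widetilde T^r)^{-1}\widetilde\Delta^r\widetilde T^r$. *)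

theory Defs
  imports Main
begin

text \<open>Matrices in F^{m x m} are represented as functions nat => nat => 'a,
  with 1-based indices 1..m (entries outside this range are irrelevant).\<close>

type_synonym 'a mtx = "nat \<Rightarrow> nat \<Rightarrow> 'a"

definition mid :: "nat \<Rightarrow> ('a::field) mtx" where
  "mid m = (\<lambda>a b. if a = b \<and> a \<in> {1..m} then 1 else 0)"

definition mzero :: "('a::field) mtx" where
  "mzero = (\<lambda>a b. 0)"

definition mmult :: "nat \<Rightarrow> ('a::field) mtx \<Rightarrow> 'a mtx \<Rightarrow> 'a mtx" where
  "mmult m A B = (\<lambda>i j. \<Sum>k\<in>{1..m}. A i k * B k j)"

definition Umat :: "nat \<Rightarrow> nat \<Rightarrow> ('a::field) mtx" where
  "Umat p q = (\<lambda>a b. if a = p \<and> b = q then 1 else 0)"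

definition msupp :: "nat \<Rightarrow> ('a::field) mtx \<Rightarrow> bool" where
  "msupp m S \<longleftrightarrow> (\<forall>a b. \<not> (a \<in> {1..m} \<and> b \<in> {1..m}) \<longrightarrow> S a b = 0)"

definition minv :: "nat \<Rightarrow> ('a::field) mtx \<Rightarrow> 'a mtx" where
  "minv m T = (SOME S. msupp m S \<and> mmult m S T = mid m \<and> mmult m T S = mid m)"

definition connection_matrix ::
    "nat \<Rightarrow> ('a::field) mtx \<Rightarrow> (nat \<Rightarrow> nat set) \<Rightarrow> nat \<Rightarrow> bool" where
  "connection_matrix m D J b \<longleftrightarrow>
     (\<Union>k\<in>{0..b}. J k) = {1..m} \<and>
     (\<forall>k\<in>{0..b}. J k \<noteq> {}) \<and>
     (\<forall>k\<in>{0..b}. \<forall>k'\<in>{0..b}. k \<noteq> k' \<longrightarrow> J k \<inter> J k' = {}) \<and>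
     (\<forall>i j. i > j \<longrightarrow> D i j = 0) \<and>
     mmult m D D = mzero \<and>
     (\<forall>i j. D i j \<noteq> 0 \<longrightarrow> i < j \<and> (\<exists>k\<in>{1..b}. i \<in> J (k - 1) \<and> j \<in> J k))"

text \<open>P k is the set of primary pivots marked at iteration k.\<close>
definition earlier :: "(nat \<Rightarrow> (nat \<times> nat) set) \<Rightarrow> nat \<Rightarrow> (nat \<times> nat) set" where
  "earlier P r = (\<Union>k\<in>{1..<r}. P k)"

definition cand :: "nat \<Rightarrow> nat \<Rightarrow> ('a::field) mtx \<Rightarrow> (nat \<Rightarrow> (nat \<times> nat) set) \<Rightarrow> (nat \<times> nat) set" where
  "cand m r D P = {(j - r, j) | j. r < j \<and> j \<le> m \<and> D (j - r) j \<noteq> 0 \<and>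
                     \<not> (\<exists>i. (i, j) \<in> earlier P r)}"

definition isa_cob :: "nat \<Rightarrow> nat \<Rightarrow> ('a::field) mtx \<Rightarrow> (nat \<Rightarrow> (nat \<times> nat) set) \<Rightarrow> (nat \<times> nat) set" where
  "isa_cob m r D P = {c \<in> cand m r D P. \<exists>p. (fst c, p) \<in> earlier P r}"

definition isa_prim :: "nat \<Rightarrow> nat \<Rightarrow> ('a::field) mtx \<Rightarrow> (nat \<Rightarrow> (nat \<times> nat) set) \<Rightarrow> (nat \<times> nat) set" where
  "isa_prim m r D P = cand m r D P - isa_cob m r D P"

definition ppcol :: "(nat \<Rightarrow> (nat \<times> nat) set) \<Rightarrow> nat \<Rightarrow> nat \<Rightarrow> nat" where
  "ppcol P r i = (THE p. (i, p) \<in> earlier P r)"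

definition isa_T :: "nat \<Rightarrow> nat \<Rightarrow> ('a::field) mtx \<Rightarrow> (nat \<Rightarrow> (nat \<times> nat) set) \<Rightarrow> 'a mtx" where
  "isa_T m r D P = (\<lambda>a b. mid m a b -
     (\<Sum>c\<in>isa_cob m r D P.
        (D (fst c) (snd c) / D (fst c) (ppcol P r (fst c))) * Umat (ppcol P r (fst c)) (snd c) a b))"

definition isa_step :: "nat \<Rightarrow> nat \<Rightarrow> ('a::field) mtx \<Rightarrow> (nat \<Rightarrow> (nat \<times> nat) set)
     \<Rightarrow> 'a mtx \<times> (nat \<Rightarrow> (nat \<times> nat) set)" where
  "isa_step m r D P =
     (let T = isa_T m r D P in
      (mmult m (mmult m (minv m T) D) T, P(r := isa_prim m r D P)))"

text \<open>isa m D r = (Delta^r, P) where P k is the set of primary pivots marked at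
  iteration k, for k < r (and empty for k >= r).\<close>
fun isa :: "nat \<Rightarrow> ('a::field) mtx \<Rightarrow> nat \<Rightarrow> 'a mtx \<times> (nat \<Rightarrow> (nat \<times> nat) set)" where
  "isa m D 0 = (D, \<lambda>_. {})"
| "isa m D (Suc 0) = (D, \<lambda>_. {})"
| "isa m D (Suc (Suc r)) = (case isa m D (Suc r) of (E, P) \<Rightarrow> isa_step m (Suc r) E P)"

definition rca_Ts :: "nat \<Rightarrow> nat \<Rightarrow> ('a::field) mtx \<Rightarrow> nat \<Rightarrow> 'a mtx" where
  "rca_Ts m r D js = (\<lambda>a b. mid m a b -
     (\<Sum>q\<in>{js+1..m}. (D (js - r) q / D (js - r) js) * Umat js q a b))"

definition rca_T :: "nat \<Rightarrow> nat \<Rightarrow> ('a::field) mtx \<Rightarrow> (nat \<Rightarrow> (nat \<times> nat) set) \<Rightarrow> 'a mtx" where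
  "rca_T m r D P =
     foldr (\<lambda>j A. mmult m (rca_Ts m r D j) A)
           (sorted_list_of_set (snd ` cand m r D P)) (mid m)"

definition rca_step :: "nat \<Rightarrow> nat \<Rightarrow> ('a::field) mtx \<Rightarrow> (nat \<Rightarrow> (nat \<times> nat) set)
     \<Rightarrow> 'a mtx \<times> (nat \<Rightarrow> (nat \<times> nat) set)" where
  "rca_step m r D P =
     (let T = rca_T m r D P in
      (if r \<le> m - 2 then mmult m (mmult m (minv m T) D) T else D,
       P(r := cand m r D P)))"

fun rca :: "nat \<Rightarrow> ('a::field) mtx \<Rightarrow> nat \<Rightarrow> 'a mtx \<times> (nat \<Rightarrow> (nat \<times> nat) set)" where
  "rca m D 0 = (D, \<lambda>_. {})"
| "rca m D (Suc 0) = (D, \<lambda>_. {})"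
| "rca m D (Suc (Suc r)) = (case rca m D (Suc r) of (E, P) \<Rightarrow> rca_step m (Suc r) E P)"

end

theory Submission
  imports Defs
begin

text \<open>
  Both algorithms conjugate the current matrix by unitriangular matrices,
  so the ISA matrix X and the RCA matrix Y before iteration r satisfy Y U = U X for some
  unitriangular U.  Both matrices are moreover "swept" with respect to the common set of
  primary pivots marked so far: in pivot-free columns the first r - 1 superdiagonals and
  everything below vanish, and each pivot is the lowest nonzero entry of its column.
  A comparison of column j of Y U and U X (lemma conjugate_entry_eq) shows that such
  conjugate swept matrices agree at all old pivots and at every position of the r-th
  diagonal in a pivot-free row and column; together with the fact that RCA keeps pivot
  rows cleared, this gives equal markup at iteration r (iteration_pivots_agree).
  It remains to show that one iteration of either algorithm restores the invariant
  (lockstep_step): for ISA by an analysis of its change of basis I - N, for RCA by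
  analysing the product of its row operations, using that the RCA matrix squares to zero.
\<close>

section \<open>Matrix algebra on index range 1..m\<close>

lemma sum_mid_left:
  "(\<Sum>k\<in>{1..m}. mid m a k * f k) = (if a \<in> {1..m} then f a else (0::'a::field))"
proof -
  have "(\<Sum>k\<in>{1..m}. mid m a k * f k) = (\<Sum>k\<in>{1..m}. if a = k then f k else 0)"
    by (rule sum.cong) (auto simp: mid_def)
  then show ?thesis by simp
qed

lemma sum_mid_right:
  "(\<Sum>k\<in>{1..m}. f k * mid m k b) = (if b \<in> {1..m} then f b else (0::'a::field))"
proof -
  have "(\<Sum>k\<in>{1..m}. f k * mid m k b) = (\<Sum>k\<in>{1..m}. if k = b then f k else 0)"
    by (rule sum.cong) (auto simp: mid_def)
  then show ?thesis by simp
qed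

lemma sum_single:
  assumes "finite S" "k \<in> S" "\<And>t. t \<in> S \<Longrightarrow> t \<noteq> k \<Longrightarrow> f t = 0"
  shows "sum f S = f k"
  using sum.mono_neutral_right[of S "{k}" f] assms by auto

lemma mmult_assoc: "mmult m (mmult m A B) C = mmult m A (mmult m B C)"
  unfolding mmult_def
  by (auto intro!: ext simp: sum_distrib_left sum_distrib_right mult.assoc intro: sum.swap)

lemma mid_mult: "msupp m A \<Longrightarrow> mmult m (mid m) A = A"
  unfolding mmult_def sum_mid_left msupp_def by (intro ext) auto

lemma mult_mid: "msupp m A \<Longrightarrow> mmult m A (mid m) = A"
  unfolding mmult_def sum_mid_right msupp_def by (intro ext) auto

lemma msupp_mult: "msupp m A \<Longrightarrow> msupp m B \<Longrightarrow> msupp m (mmult m A B)"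
  unfolding mmult_def msupp_def by auto

lemma msupp_mid: "msupp m (mid m)"
  unfolding msupp_def mid_def by auto

lemma mult_mzero_left: "mmult m mzero A = mzero"
  and mult_mzero_right: "mmult m A mzero = mzero"
  unfolding mmult_def mzero_def by auto

definition unitri :: "nat \<Rightarrow> ('a::field) mtx \<Rightarrow> bool" where
  "unitri m U \<longleftrightarrow> msupp m U \<and> (\<forall>a b. b < a \<longrightarrow> U a b = 0) \<and> (\<forall>a\<in>{1..m}. U a a = 1)"

lemma unitri_mid: "unitri m (mid m)"
  unfolding unitri_def mid_def msupp_def by auto

lemma unitri_mult:
  assumes A: "unitri m A" and B: "unitri m B"
  shows "unitri m (mmult m A B)"
proof -
  have lA: "\<And>a b. b < a \<Longrightarrow> A a b = 0" and dA: "\<And>a. a \<in> {1..m} \<Longrightarrow> A a a = 1"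
    and lB: "\<And>a b. b < a \<Longrightarrow> B a b = 0" and dB: "\<And>a. a \<in> {1..m} \<Longrightarrow> B a a = 1"
    using A B unfolding unitri_def by auto
  have "mmult m A B a b = 0" if "b < a" for a b
  proof -
    have "A a k * B k b = 0" for k
      using lA[of k a] lB[of b k] \<open>b < a\<close> by (cases "k < a") auto
    then show ?thesis unfolding mmult_def by (simp del: mult_eq_0_iff)
  qed
  moreover have "mmult m A B a a = 1" if a: "a \<in> {1..m}" for a
  proof -
    have "mmult m A B a a = A a a * B a a"
      unfolding mmult_def
    proof (rule sum_single)
      show "A a k * B k a = 0" if "k \<in> {1..m}" "k \<noteq> a" for k
        using lA[of k a] lB[of a k] that by (cases "k < a") auto
    qed (use a in auto)
    then show ?thesis using dA dB a by simp
  qed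
  moreover have "msupp m (mmult m A B)"
    using A B msupp_mult unfolding unitri_def by blast
  ultimately show ?thesis unfolding unitri_def by blast
qed

lemma unitri_mult_entry:
  assumes "unitri m V" "k \<in> {1..m}" "\<And>t. t \<in> {1..m} \<Longrightarrow> k < t \<Longrightarrow> B t l = 0"
  shows "mmult m V B k l = B k l"
proof -
  have lV: "\<And>a b. b < a \<Longrightarrow> V a b = 0" and dV: "\<And>a. a \<in> {1..m} \<Longrightarrow> V a a = 1"
    using assms(1) unfolding unitri_def by auto
  have "mmult m V B k l = V k k * B k l"
    unfolding mmult_def
  proof (rule sum_single)
    show "V k t * B t l = 0" if "t \<in> {1..m}" "t \<noteq> k" for t
      using lV[of t k] assms(3)[of t] that by (cases "t < k") auto
  qed (use assms(2) in auto)
  then show ?thesis using dV assms(2) by simp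
qed

definition is_inverse :: "nat \<Rightarrow> ('a::field) mtx \<Rightarrow> 'a mtx \<Rightarrow> bool" where
  "is_inverse m T S \<longleftrightarrow> msupp m S \<and> mmult m S T = mid m \<and> mmult m T S = mid m"

lemma minv_eq:
  assumes "is_inverse m T S"
  shows "minv m T = S"
proof -
  have ex: "\<exists>S. msupp m S \<and> mmult m S T = mid m \<and> mmult m T S = mid m"
    using assms unfolding is_inverse_def by blast
  define S' where "S' = minv m T"
  have S': "msupp m S' \<and> mmult m S' T = mid m \<and> mmult m T S' = mid m"
    unfolding S'_def minv_def by (rule someI_ex[OF ex])
  have "S' = mmult m S' (mmult m T S)" using assms S' unfolding is_inverse_def by (simp add: mult_mid)
  also have "\<dots> = mmult m (mmult m S' T) S" by (simp add: mmult_assoc)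
  also have "\<dots> = S" using assms S' unfolding is_inverse_def by (simp add: mid_mult)
  finally show ?thesis unfolding S'_def .
qed

lemma is_inverse_mid: "is_inverse m (mid m) (mid m :: ('a::field) mtx)"
  unfolding is_inverse_def using mid_mult[OF msupp_mid] msupp_mid by auto

lemma is_inverse_mult:
  assumes "is_inverse m A A'" "is_inverse m B B'" "msupp m A" "msupp m B"
  shows "is_inverse m (mmult m A B) (mmult m B' A')"
proof -
  have "mmult m (mmult m B' A') (mmult m A B) = mmult m B' (mmult m (mmult m A' A) B)"
    and "mmult m (mmult m A B) (mmult m B' A') = mmult m A (mmult m (mmult m B B') A')"
    by (simp_all add: mmult_assoc)
  then show ?thesis
    using assms msupp_mult[of m B' A'] unfolding is_inverse_def by (simp add: mid_mult)
qed

lemma is_inverse_cancel: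
  "is_inverse m T S \<Longrightarrow> msupp m Z \<Longrightarrow> mmult m T (mmult m S Z) = Z"
  unfolding is_inverse_def by (metis mid_mult mmult_assoc)

text \<open>If N N = 0 then I - N is invertible with inverse
  I + N; for strictly upper triangular N both are unitriangular.
  Every change-of-basis matrix of both algorithms has this form.\<close>

lemma is_inverse_square_zero:
  fixes N :: "('a::field) mtx"
  assumes sN: "msupp m N" and NN: "mmult m N N = mzero"
  shows "is_inverse m (\<lambda>a b. mid m a b - N a b) (\<lambda>a b. mid m a b + N a b)"
proof -
  have N0: "\<And>a b. \<not>(a\<in>{1..m} \<and> b\<in>{1..m}) \<Longrightarrow> N a b = 0"
    using sN unfolding msupp_def by blast
  have NN0: "\<And>a b. (\<Sum>k\<in>{1..m}. N a k * N k b) = 0"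
    using NN unfolding mmult_def mzero_def by metis
  have left: "mmult m (\<lambda>a b. mid m a b + N a b) (\<lambda>a b. mid m a b - N a b) = mid m"
  proof (intro ext)
    fix a b
    have "(\<Sum>k\<in>{1..m}. (mid m a k + N a k) * (mid m k b - N k b))
       = (\<Sum>k\<in>{1..m}. mid m a k * mid m k b) - (\<Sum>k\<in>{1..m}. mid m a k * N k b)
         + (\<Sum>k\<in>{1..m}. N a k * mid m k b) - (\<Sum>k\<in>{1..m}. N a k * N k b)"
      by (simp only: ring_distribs sum.distrib sum_subtractf) (simp add: algebra_simps)
    also have "\<dots> = mid m a b"
      unfolding sum_mid_left sum_mid_right NN0 using N0[of a b] by (auto simp: mid_def)
    finally show "mmult m (\<lambda>a b. mid m a b + N a b) (\<lambda>a b. mid m a b - N a b) a b = mid m a b"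
      unfolding mmult_def .
  qed
  have right: "mmult m (\<lambda>a b. mid m a b - N a b) (\<lambda>a b. mid m a b + N a b) = mid m"
  proof (intro ext)
    fix a b
    have "(\<Sum>k\<in>{1..m}. (mid m a k - N a k) * (mid m k b + N k b))
       = (\<Sum>k\<in>{1..m}. mid m a k * mid m k b) + (\<Sum>k\<in>{1..m}. mid m a k * N k b)
         - (\<Sum>k\<in>{1..m}. N a k * mid m k b) - (\<Sum>k\<in>{1..m}. N a k * N k b)"
      by (simp only: ring_distribs sum.distrib sum_subtractf) (simp add: algebra_simps)
    also have "\<dots> = mid m a b"
      unfolding sum_mid_left sum_mid_right NN0 using N0[of a b] by (auto simp: mid_def)
    finally show "mmult m (\<lambda>a b. mid m a b - N a b) (\<lambda>a b. mid m a b + N a b) a b = mid m a b"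
      unfolding mmult_def .
  qed
  have "msupp m (\<lambda>a b. mid m a b + N a b)" using N0 unfolding msupp_def mid_def by auto
  with left right show ?thesis unfolding is_inverse_def by blast
qed

lemma unitri_id_minus:
  assumes "msupp m N" "\<And>a b. b \<le> a \<Longrightarrow> N a b = 0"
  shows "unitri m (\<lambda>a b. mid m a b - N a b)" "unitri m (\<lambda>a b. mid m a b + N a b)"
  using assms unfolding unitri_def msupp_def mid_def by auto
section \<open>Pivot sets and swept matrices\<close>

definition pivot_set :: "nat \<Rightarrow> nat \<Rightarrow> (nat \<times> nat) set \<Rightarrow> bool" where
  "pivot_set m r PP \<longleftrightarrow> (\<forall>h l. (h,l) \<in> PP \<longrightarrow> 1 \<le> h \<and> h < l \<and> l \<le> m \<and> l - h < r) \<and>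
     (\<forall>h l l'. (h,l) \<in> PP \<longrightarrow> (h,l') \<in> PP \<longrightarrow> l = l') \<and>
     (\<forall>h h' l. (h,l) \<in> PP \<longrightarrow> (h',l) \<in> PP \<longrightarrow> h = h')"

lemma pivot_setD:
  assumes "pivot_set m r PP"
  shows "\<And>h l. (h,l) \<in> PP \<Longrightarrow> 1 \<le> h \<and> h < l \<and> l \<le> m \<and> l - h < r"
    and "\<And>h l l'. (h,l) \<in> PP \<Longrightarrow> (h,l') \<in> PP \<Longrightarrow> l = l'"
    and "\<And>h h' l. (h,l) \<in> PP \<Longrightarrow> (h',l) \<in> PP \<Longrightarrow> h = h'"
  using assms unfolding pivot_set_def by blast+

definition col_free :: "(nat \<times> nat) set \<Rightarrow> nat \<Rightarrow> bool" where
  "col_free PP c \<longleftrightarrow> \<not> (\<exists>h. (h,c) \<in> PP)"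

definition row_free :: "(nat \<times> nat) set \<Rightarrow> nat \<Rightarrow> bool" where
  "row_free PP i \<longleftrightarrow> \<not> (\<exists>p. (i,p) \<in> PP)"

lemma pivot_set_extend:
  assumes r: "1 \<le> r" and P: "pivot_set m r PP"
    and new: "\<And>h l. (h,l) \<in> N \<Longrightarrow> r < l \<and> l \<le> m \<and> h = l - r \<and> col_free PP l \<and> row_free PP h"
  shows "pivot_set m (Suc r) (PP \<union> N)"
proof -
  note P1 = pivot_setD(1)[OF P] and P2 = pivot_setD(2)[OF P] and P3 = pivot_setD(3)[OF P]
  have "1 \<le> h \<and> h < l \<and> l \<le> m \<and> l - h < Suc r" if "(h,l) \<in> PP \<union> N" for h l
    using that P1[of h l] new[of h l] r by auto
  moreover have "l = l'" if "(h,l) \<in> PP \<union> N" "(h,l') \<in> PP \<union> N" for h l l'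
    using that P2[of h l l'] new[of h l] new[of h l'] unfolding row_free_def by auto
  moreover have "h = h'" if "(h,l) \<in> PP \<union> N" "(h',l) \<in> PP \<union> N" for h h' l
    using that P3[of h l h'] new[of h l] new[of h' l] unfolding col_free_def by auto
  ultimately show ?thesis unfolding pivot_set_def by blast
qed

definition swept :: "nat \<Rightarrow> nat \<Rightarrow> (nat \<times> nat) set \<Rightarrow> ('a::field) mtx \<Rightarrow> bool" where
  "swept m r PP A \<longleftrightarrow>
     (\<forall>c k. c \<in> {1..m} \<longrightarrow> k \<in> {1..m} \<longrightarrow> col_free PP c \<longrightarrow> c - k < r \<longrightarrow> A k c = 0) \<and>
     (\<forall>h l. (h,l) \<in> PP \<longrightarrow> A h l \<noteq> 0 \<and> (\<forall>k\<in>{1..m}. h < k \<longrightarrow> A k l = 0))"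

lemma sweptD:
  assumes "swept m r PP A"
  shows "\<And>c k. c \<in> {1..m} \<Longrightarrow> k \<in> {1..m} \<Longrightarrow> col_free PP c \<Longrightarrow> c - k < r \<Longrightarrow> A k c = 0"
    and "\<And>h l. (h,l) \<in> PP \<Longrightarrow> A h l \<noteq> 0 \<and> (\<forall>k\<in>{1..m}. h < k \<longrightarrow> A k l = 0)"
  using assms unfolding swept_def by blast+

text \<open>In addition, the Row Cancellation Algorithm keeps every pivot row zero to the
  right of its pivot.\<close>

definition rows_cleared :: "nat \<Rightarrow> (nat \<times> nat) set \<Rightarrow> ('a::field) mtx \<Rightarrow> bool" where
  "rows_cleared m PP A \<longleftrightarrow> (\<forall>h l q. (h,l) \<in> PP \<longrightarrow> q \<in> {1..m} \<longrightarrow> l < q \<longrightarrow> A h q = 0)"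

text \<open>Being swept is invariant under left multiplication by a unitriangular matrix,
  since the conditions only concern column segments that reach down to row m.\<close>

lemma swept_unitri_mult:
  assumes V: "unitri m V" and P: "pivot_set m r PP" and B: "swept m r PP B"
  shows "swept m r PP (mmult m V B)"
proof -
  note B1 = sweptD(1)[OF B] and B2 = sweptD(2)[OF B]
  have "mmult m V B k c = 0"
    if "c \<in> {1..m}" "k \<in> {1..m}" "col_free PP c" "c - k < r" for c k
  proof -
    have "mmult m V B k c = B k c"
      using that by (intro unitri_mult_entry[OF V]) (auto intro!: B1)
    then show ?thesis using B1 that by simp
  qed
  moreover have "mmult m V B h l \<noteq> 0 \<and> (\<forall>k\<in>{1..m}. h < k \<longrightarrow> mmult m V B k l = 0)"
    if hl: "(h,l) \<in> PP" for h l
  proof -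
    have same: "mmult m V B k l = B k l" if "k \<in> {1..m}" "h \<le> k" for k
      using B2[OF hl] that by (intro unitri_mult_entry[OF V]) auto
    have "h \<in> {1..m}" using pivot_setD(1)[OF P hl] by auto
    then show ?thesis using same B2[OF hl] by auto
  qed
  ultimately show ?thesis unfolding swept_def by blast
qed
section \<open>Entries preserved by unitriangular conjugation\<close>

lemma conjugate_column_eq:
  fixes X Y U :: "('a::field) mtx"
  assumes U: "unitri m U" and YU: "mmult m Y U = mmult m U X"
    and ij: "i \<in> {1..m}" "j \<in> {1..m}"
    and Xcol: "\<And>k. k \<in> {1..m} \<Longrightarrow> i < k \<Longrightarrow> X k j = 0"
    and k: "k \<in> {i..m}"
  shows "Y k j + (\<Sum>c\<in>{1..<j}. Y k c * U c j) = X k j"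
proof -
  have lU: "\<And>a b. b < a \<Longrightarrow> U a b = 0" and dU: "\<And>a. a \<in> {1..m} \<Longrightarrow> U a a = 1"
    using U unfolding unitri_def by auto
  have "mmult m Y U k j = (\<Sum>t\<in>insert j {1..<j}. Y k t * U t j)"
    unfolding mmult_def using ij lU by (intro sum.mono_neutral_right) auto
  also have "\<dots> = Y k j + (\<Sum>c\<in>{1..<j}. Y k c * U c j)"
    using dU ij by simp
  finally have "mmult m Y U k j = Y k j + (\<Sum>c\<in>{1..<j}. Y k c * U c j)" .
  moreover have "mmult m U X k j = U k k * X k j"
    unfolding mmult_def
  proof (rule sum_single)
    show "U k t * X t j = 0" if "t \<in> {1..m}" "t \<noteq> k" for t
      using lU[of t k] Xcol[of t] that k by (cases "t < k") auto
  qed (use k ij in auto)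
  ultimately show ?thesis using YU dU k ij by auto
qed

text \<open>Comparing column j of Y U and U X, the contribution of the earlier columns of Y must
  vanish; looking at the lowest row reached by a column that contributes shows that
  none does.\<close>

lemma conjugate_entry_eq:
  fixes X Y U :: "('a::field) mtx" and lowest :: "nat \<Rightarrow> nat"
  assumes U: "unitri m U" and YU: "mmult m Y U = mmult m U X"
    and ij: "i \<in> {1..m}" "j \<in> {1..m}"
    and Xcol: "\<And>k. k \<in> {1..m} \<Longrightarrow> i < k \<Longrightarrow> X k j = 0"
    and Ycol: "\<And>k. k \<in> {1..m} \<Longrightarrow> i < k \<Longrightarrow> Y k j = 0"
    and cols: "\<And>c. c \<in> {1..<j} \<Longrightarrow> (\<forall>k\<in>{i..m}. Y k c = 0) \<or>
                 (i < lowest c \<and> lowest c \<le> m \<and> Y (lowest c) c \<noteq> 0 \<and>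
                  (\<forall>k\<in>{1..m}. lowest c < k \<longrightarrow> Y k c = 0))"
    and inj: "\<And>c c'. c \<in> {1..<j} \<Longrightarrow> c' \<in> {1..<j} \<Longrightarrow> \<not>(\<forall>k\<in>{i..m}. Y k c = 0) \<Longrightarrow>
                 \<not>(\<forall>k\<in>{i..m}. Y k c' = 0) \<Longrightarrow> lowest c = lowest c' \<Longrightarrow> c = c'"
  shows "X i j = Y i j"
proof -
  have col_eq: "Y k j + (\<Sum>c\<in>{1..<j}. Y k c * U c j) = X k j" if "k \<in> {i..m}" for k
    using U YU ij Xcol that by (rule conjugate_column_eq)
  define C where "C = {c\<in>{1..<j}. U c j \<noteq> 0 \<and> \<not>(\<forall>k\<in>{i..m}. Y k c = 0)}"
  have C_lowest: "i < lowest c \<and> lowest c \<le> m \<and> Y (lowest c) c \<noteq> 0 \<and>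
      (\<forall>k\<in>{1..m}. lowest c < k \<longrightarrow> Y k c = 0)" if "c \<in> C" for c
    using cols[of c] that unfolding C_def by auto
  have "C = {}"
  proof (rule ccontr)
    assume "C \<noteq> {}"
    moreover have "finite C" unfolding C_def by auto
    ultimately have "Max (lowest ` C) \<in> lowest ` C" by (intro Max_in) auto
    then obtain cs where cs: "cs \<in> C" and hs_def: "lowest cs = Max (lowest ` C)" by auto
    have cs_max: "lowest c \<le> lowest cs" if "c \<in> C" for c
      unfolding hs_def using \<open>finite C\<close> that by simp
    define hs where "hs = lowest cs"
    have hs: "hs \<in> {i..m}" "i < hs" using C_lowest[OF cs] unfolding hs_def by auto
    have "(\<Sum>c\<in>{1..<j}. Y hs c * U c j) = Y hs cs * U cs j"
    proof (rule sum_single)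
      fix c assume c: "c \<in> {1..<j}" "c \<noteq> cs"
      show "Y hs c * U c j = 0"
      proof (cases "c \<in> C")
        case False
        then show ?thesis using c hs unfolding C_def by auto
      next
        case True
        have "lowest c \<noteq> hs" using inj[of c cs] True cs c unfolding C_def hs_def by auto
        then have "lowest c < hs" using cs_max[OF True] unfolding hs_def by simp
        then show ?thesis using C_lowest[OF True] hs ij by auto
      qed
    qed (use cs C_def in auto)
    moreover have "(\<Sum>c\<in>{1..<j}. Y hs c * U c j) = 0"
      using col_eq[OF hs(1)] Ycol[of hs] Xcol[of hs] hs ij by auto
    ultimately have "Y hs cs * U cs j = 0" by simp
    then show False using C_lowest[OF cs] cs unfolding C_def hs_def by simp
  qed
  then have "(\<Sum>c\<in>{1..<j}. Y i c * U c j) = 0"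
    using ij unfolding C_def by (intro sum.neutral) auto
  then show ?thesis using col_eq[of i] ij by auto
qed

lemma swept_conjugate_entry_eq:
  fixes X Y U :: "('a::field) mtx"
  assumes U: "unitri m U" and YU: "mmult m Y U = mmult m U X"
    and P: "pivot_set m r PP" and Y: "swept m r PP Y"
    and ij: "i \<in> {1..m}" "j \<in> {1..m}"
    and Xcol: "\<And>k. k \<in> {1..m} \<Longrightarrow> i < k \<Longrightarrow> X k j = 0"
    and Ycol: "\<And>k. k \<in> {1..m} \<Longrightarrow> i < k \<Longrightarrow> Y k j = 0"
    and free_band: "\<And>c. c \<in> {1..<j} \<Longrightarrow> col_free PP c \<Longrightarrow> c - i < r"
    and no_pivot: "\<And>h c. (h,c) \<in> PP \<Longrightarrow> c < j \<Longrightarrow> h \<noteq> i"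
  shows "X i j = Y i j"
proof -
  note P1 = pivot_setD(1)[OF P] and P2 = pivot_setD(2)[OF P] and P3 = pivot_setD(3)[OF P]
  note Y1 = sweptD(1)[OF Y] and Y2 = sweptD(2)[OF Y]
  define lowest where "lowest c = (THE h. (h,c) \<in> PP)" for c
  have lowest: "lowest c = h" if "(h,c) \<in> PP" for h c
    unfolding lowest_def using P3 that by blast
  have free_zero: "\<forall>k\<in>{i..m}. Y k c = 0" if c: "c \<in> {1..<j}" "col_free PP c" for c
    using free_band[OF c] Y1 c ij by auto
  have cols: "(\<forall>k\<in>{i..m}. Y k c = 0) \<or> (i < lowest c \<and> lowest c \<le> m \<and>
      Y (lowest c) c \<noteq> 0 \<and> (\<forall>k\<in>{1..m}. lowest c < k \<longrightarrow> Y k c = 0))"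
    if c: "c \<in> {1..<j}" for c
  proof (cases "col_free PP c")
    case True
    then show ?thesis using free_zero c by blast
  next
    case False
    then obtain h where h: "(h,c) \<in> PP" unfolding col_free_def by auto
    have "h \<noteq> i" using no_pivot[OF h] c by auto
    then show ?thesis
      using Y2[OF h] P1[OF h] lowest[OF h] ij by (cases "h < i") auto
  qed
  show ?thesis
  proof (rule conjugate_entry_eq[OF U YU ij Xcol Ycol cols])
    fix c c' assume c: "c \<in> {1..<j}" "c' \<in> {1..<j}" "\<not>(\<forall>k\<in>{i..m}. Y k c = 0)"
      "\<not>(\<forall>k\<in>{i..m}. Y k c' = 0)" "lowest c = lowest c'"
    obtain h h' where "(h,c) \<in> PP" "(h',c') \<in> PP"
      using free_zero c unfolding col_free_def by blast
    then show "c = c'" using lowest c(5) P2 by metis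
  qed auto
qed

lemma conjugate_swept_agree_at_pivots:
  fixes X Y U :: "('a::field) mtx"
  assumes U: "unitri m U" and YU: "mmult m Y U = mmult m U X" and P: "pivot_set m r PP"
    and X: "swept m r PP X" and Y: "swept m r PP Y" and ip: "(i,p) \<in> PP"
  shows "X i p = Y i p"
proof (rule swept_conjugate_entry_eq[OF U YU P Y])
  note P1 = pivot_setD(1)[OF P]
  show "i \<in> {1..m}" "p \<in> {1..m}" using P1[OF ip] by auto
  show "\<And>k. k \<in> {1..m} \<Longrightarrow> i < k \<Longrightarrow> X k p = 0" using sweptD(2)[OF X ip] by auto
  show "\<And>k. k \<in> {1..m} \<Longrightarrow> i < k \<Longrightarrow> Y k p = 0" using sweptD(2)[OF Y ip] by auto
  show "\<And>c. c \<in> {1..<p} \<Longrightarrow> col_free PP c \<Longrightarrow> c - i < r" using P1[OF ip] by auto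
  show "\<And>h c. (h,c) \<in> PP \<Longrightarrow> c < p \<Longrightarrow> h \<noteq> i" using pivot_setD(2)[OF P] ip by blast
qed

lemma conjugate_swept_agree_on_diagonal:
  fixes X Y U :: "('a::field) mtx"
  assumes r: "1 \<le> r" and U: "unitri m U" and YU: "mmult m Y U = mmult m U X"
    and P: "pivot_set m r PP" and X: "swept m r PP X" and Y: "swept m r PP Y"
    and ij: "r < j" "j \<le> m" "i = j - r" "col_free PP j" "row_free PP i"
  shows "X i j = Y i j"
proof (rule swept_conjugate_entry_eq[OF U YU P Y])
  show "i \<in> {1..m}" "j \<in> {1..m}" using ij by auto
  have band: "j - k < r" if "i < k" for k using that ij(1,3) r by arith
  show "\<And>k. k \<in> {1..m} \<Longrightarrow> i < k \<Longrightarrow> X k j = 0" using sweptD(1)[OF X] band ij by auto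
  show "\<And>k. k \<in> {1..m} \<Longrightarrow> i < k \<Longrightarrow> Y k j = 0" using sweptD(1)[OF Y] band ij by auto
  show "\<And>c. c \<in> {1..<j} \<Longrightarrow> col_free PP c \<Longrightarrow> c - i < r" using ij(1,3) r by auto
  show "\<And>h c. (h,c) \<in> PP \<Longrightarrow> c < j \<Longrightarrow> h \<noteq> i" using ij unfolding row_free_def by blast
qed
section \<open>Markup of both algorithms\<close>

lemma cand_iff:
  "(i,j) \<in> cand m r A P \<longleftrightarrow> r < j \<and> j \<le> m \<and> i = j - r \<and> A i j \<noteq> 0 \<and> col_free (earlier P r) j"
  unfolding cand_def col_free_def by auto

lemma isa_cob_iff:
  "(i,j) \<in> isa_cob m r A P \<longleftrightarrow> (i,j) \<in> cand m r A P \<and> \<not> row_free (earlier P r) i"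
  unfolding isa_cob_def row_free_def by auto

lemma isa_prim_iff:
  "(i,j) \<in> isa_prim m r A P \<longleftrightarrow> (i,j) \<in> cand m r A P \<and> row_free (earlier P r) i"
  unfolding isa_prim_def using isa_cob_iff by blast

lemma isa_cob_finite: "finite (isa_cob m r X P)"
proof -
  have "isa_cob m r X P \<subseteq> (\<lambda>j. (j - r, j)) ` {..m}"
    unfolding isa_cob_def cand_def by auto
  then show ?thesis by (rule finite_surj[OF finite_atMost])
qed

lemma earlier_Suc: "1 \<le> r \<Longrightarrow> earlier (P(r := S)) (Suc r) = earlier P r \<union> S"
proof -
  assume "1 \<le> r"
  then have "{1..<Suc r} = insert r {1..<r}" by auto
  then show ?thesis unfolding earlier_def by auto
qed

lemma pivots_upto_eq: "1 \<le> r \<Longrightarrow> (\<Union>k\<in>{1..r}. (P(r := S)) k) = earlier P r \<union> S"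
  using earlier_Suc[of r P S] unfolding earlier_def by (simp add: atLeastLessThanSuc_atLeastAtMost)

lemma pivot_set_isa_prim:
  assumes r: "1 \<le> r" and P: "pivot_set m r (earlier Q r)"
  shows "pivot_set m (Suc r) (earlier Q r \<union> isa_prim m r X Q)"
  by (rule pivot_set_extend[OF r P]) (auto simp: isa_prim_iff cand_iff)

text \<open>Old pivots and new candidates of a swept matrix are lowest nonzero entries of
  their columns: for candidates everything below lies in the swept band.\<close>

lemma pivot_lowest:
  fixes A :: "('a::field) mtx"
  assumes r: "1 \<le> r" and P: "pivot_set m r (earlier Q r)" and A: "swept m r (earlier Q r) A"
    and hl: "(h,l) \<in> earlier Q r \<union> cand m r A Q"
  shows "1 \<le> h \<and> h < l \<and> l \<le> m \<and> A h l \<noteq> 0 \<and> (\<forall>k\<in>{1..m}. h < k \<longrightarrow> A k l = 0)"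
  using hl
proof
  assume "(h,l) \<in> earlier Q r"
  then show ?thesis using pivot_setD(1)[OF P] sweptD(2)[OF A] by blast
next
  assume "(h,l) \<in> cand m r A Q"
  then have n: "r < l" "l \<le> m" "h = l - r" "A h l \<noteq> 0" "col_free (earlier Q r) l"
    unfolding cand_iff by auto
  have "A k l = 0" if "k \<in> {1..m}" "h < k" for k
  proof -
    have "l - k < r" using that n r by arith
    then show ?thesis using sweptD(1)[OF A] n that by auto
  qed
  then show ?thesis using n r by auto
qed

text \<open>New pivots in rows already carrying
  a pivot cannot occur for Y, because those rows are cleared.\<close>

lemma iteration_pivots_agree:
  fixes m r :: nat and X Y U :: "('a::field) mtx" and Q :: "nat \<Rightarrow> (nat \<times> nat) set"
  defines "PP \<equiv> earlier Q r"
  assumes r: "1 \<le> r" and P: "pivot_set m r PP"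
    and X: "swept m r PP X" and Y: "swept m r PP Y" and R: "rows_cleared m PP Y"
    and U: "unitri m U" and YU: "mmult m Y U = mmult m U X"
  shows "isa_prim m r X Q = cand m r Y Q"
    and "\<And>i j. (i,j) \<in> PP \<union> isa_prim m r X Q \<Longrightarrow> X i j = Y i j"
proof -
  have at_new: "X i j = Y i j"
    if "r < j" "j \<le> m" "i = j - r" "col_free PP j" "row_free PP i" for i j
    using conjugate_swept_agree_on_diagonal[OF r U YU P X Y] that by blast
  show same_marks: "isa_prim m r X Q = cand m r Y Q"
  proof (intro set_eqI)
    fix x :: "nat \<times> nat"
    obtain i j :: nat where x: "x = (i,j)" by (cases x)
    show "x \<in> isa_prim m r X Q \<longleftrightarrow> x \<in> cand m r Y Q"
    proof (cases "row_free PP i")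
      case True
      then show ?thesis unfolding x isa_prim_iff cand_iff using at_new PP_def by auto
    next
      case False
      then obtain p where p: "(i,p) \<in> PP" unfolding row_free_def by auto
      have "Y i j = 0" if "r < j" "j \<le> m" "i = j - r"
        using R p pivot_setD(1)[OF P p] that unfolding rows_cleared_def by auto
      then have "x \<notin> cand m r Y Q" unfolding x cand_iff by auto
      then show ?thesis unfolding x isa_prim_iff using False PP_def by auto
    qed
  qed
  show "X i j = Y i j" if "(i,j) \<in> PP \<union> isa_prim m r X Q" for i j
    using that
  proof
    assume "(i,j) \<in> isa_prim m r X Q"
    then show ?thesis using at_new unfolding isa_prim_iff cand_iff PP_def by auto
  qed (rule conjugate_swept_agree_at_pivots[OF U YU P X Y])
qed
section \<open>One iteration of the Incremental Sweeping Algorithm\<close>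

text \<open>The ISA change of basis is I - N, where for every change-of-basis pivot (j - r, j)
  the column j receives a multiple of the column p of the primary pivot (j - r, p),
  chosen to cancel the entry at (j - r, j).\<close>

definition isa_N :: "nat \<Rightarrow> nat \<Rightarrow> ('a::field) mtx \<Rightarrow> (nat \<Rightarrow> (nat \<times> nat) set) \<Rightarrow> 'a mtx" where
  "isa_N m r X P = (\<lambda>a b. if (b - r, b) \<in> isa_cob m r X P \<and> a = ppcol P r (b - r)
                          then X (b - r) b / X (b - r) a else 0)"

lemma isa_T_eq: "isa_T m r X P = (\<lambda>a b. mid m a b - isa_N m r X P a b)"
proof (intro ext)
  fix a b
  define pp where "pp = ppcol P r"
  have "(\<Sum>c\<in>isa_cob m r X P. X (fst c) (snd c) / X (fst c) (pp (fst c)) * Umat (pp (fst c)) (snd c) a b)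
      = (\<Sum>c\<in>isa_cob m r X P. if c = (b - r, b) then isa_N m r X P a b else 0)"
  proof (rule sum.cong)
    fix c assume c: "c \<in> isa_cob m r X P"
    obtain i j where cij: "c = (i,j)" by (cases c)
    have "i = j - r" using c unfolding cij isa_cob_iff cand_iff by auto
    then show "X (fst c) (snd c) / X (fst c) (pp (fst c)) * Umat (pp (fst c)) (snd c) a b =
        (if c = (b - r, b) then isa_N m r X P a b else 0)"
      using c unfolding Umat_def isa_N_def cij pp_def by auto
  qed simp
  also have "\<dots> = isa_N m r X P a b"
    using isa_cob_finite[of m r X P] by (simp add: isa_N_def)
  finally show "isa_T m r X P a b = mid m a b - isa_N m r X P a b"
    unfolding isa_T_def pp_def by simp
qed

lemma ppcol_eq: "pivot_set m r (earlier P r) \<Longrightarrow> (i,p) \<in> earlier P r \<Longrightarrow> ppcol P r i = p"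
  unfolding ppcol_def using pivot_setD(2) by blast

lemma isa_N_nonzero:
  assumes "pivot_set m r (earlier P r)" "isa_N m r X P a b \<noteq> 0"
  shows "(b - r, b) \<in> isa_cob m r X P \<and> (b - r, a) \<in> earlier P r"
proof -
  have cob: "(b - r, b) \<in> isa_cob m r X P" and a: "a = ppcol P r (b - r)"
    using assms(2) unfolding isa_N_def by (auto split: if_splits)
  then obtain p where p: "(b - r, p) \<in> earlier P r"
    unfolding isa_cob_iff row_free_def by blast
  then show ?thesis using cob a ppcol_eq[OF assms(1)] by auto
qed

lemma isa_N_props:
  assumes r: "1 \<le> r" and P: "pivot_set m r (earlier P r)"
  shows "msupp m (isa_N m r X P)" "\<And>a b. b \<le> a \<Longrightarrow> isa_N m r X P a b = 0"
    "mmult m (isa_N m r X P) (isa_N m r X P) = mzero"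
proof -
  note nz = isa_N_nonzero[OF P] and P1 = pivot_setD(1)[OF P]
  have cob: "r < b \<and> b \<le> m \<and> col_free (earlier P r) b" if "(b - r, b) \<in> isa_cob m r X P" for b
    using that unfolding isa_cob_iff cand_iff by auto
  show "msupp m (isa_N m r X P)"
    unfolding msupp_def
  proof (intro allI impI)
    fix a b assume ab: "\<not> (a \<in> {1..m} \<and> b \<in> {1..m})"
    show "isa_N m r X P a b = 0"
    proof (rule ccontr)
      assume "isa_N m r X P a b \<noteq> 0"
      then have "(b - r, b) \<in> isa_cob m r X P" "(b - r, a) \<in> earlier P r" using nz by auto
      then show False using ab cob P1 by fastforce
    qed
  qed
  show "isa_N m r X P a b = 0" if "b \<le> a" for a b
  proof (rule ccontr)
    assume "isa_N m r X P a b \<noteq> 0"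
    then have "a - (b - r) < r" "r < b" using nz P1 cob by blast+
    then show False using \<open>b \<le> a\<close> by arith
  qed
  show "mmult m (isa_N m r X P) (isa_N m r X P) = mzero"
    unfolding mmult_def mzero_def
  proof (intro ext sum.neutral ballI)
    fix a b k
    show "isa_N m r X P a k * isa_N m r X P k b = 0"
    proof (rule ccontr)
      assume "isa_N m r X P a k * isa_N m r X P k b \<noteq> 0"
      then have "(k - r, k) \<in> isa_cob m r X P" "(b - r, k) \<in> earlier P r" using nz by auto
      then show False using cob unfolding col_free_def by blast
    qed
  qed
qed

lemma isa_T_props:
  assumes r: "1 \<le> r" and P: "pivot_set m r (earlier P r)"
  shows "unitri m (isa_T m r X P)" "unitri m (minv m (isa_T m r X P))"
    "is_inverse m (isa_T m r X P) (minv m (isa_T m r X P))"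
proof -
  note N = isa_N_props[OF r P, where X=X]
  have inv: "is_inverse m (isa_T m r X P) (\<lambda>a b. mid m a b + isa_N m r X P a b)"
    unfolding isa_T_eq by (rule is_inverse_square_zero[OF N(1,3)])
  then show "is_inverse m (isa_T m r X P) (minv m (isa_T m r X P))"
    by (simp add: minv_eq)
  show "unitri m (isa_T m r X P)" "unitri m (minv m (isa_T m r X P))"
    using unitri_id_minus[OF N(1,2)] inv by (simp_all add: isa_T_eq minv_eq)
qed

lemma isa_product_column:
  assumes P: "pivot_set m r (earlier P r)" and c: "c \<in> {1..m}"
  shows "(c - r, c) \<notin> isa_cob m r X P \<Longrightarrow> mmult m X (isa_T m r X P) t c = X t c"
    and "(c - r, c) \<in> isa_cob m r X P \<Longrightarrow> (c - r, p) \<in> earlier P r \<Longrightarrow>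
         mmult m X (isa_T m r X P) t c = X t c - X (c - r) c / X (c - r) p * X t p"
proof -
  note nz = isa_N_nonzero[OF P]
  have prod: "mmult m X (isa_T m r X P) t c = X t c - (\<Sum>k\<in>{1..m}. X t k * isa_N m r X P k c)"
    unfolding mmult_def isa_T_eq using c
    by (simp add: right_diff_distrib sum_subtractf sum_mid_right[of "\<lambda>k. X t k" m c, simplified])
  show "mmult m X (isa_T m r X P) t c = X t c" if "(c - r, c) \<notin> isa_cob m r X P"
    unfolding prod using nz that by (subst sum.neutral) auto
  assume cob: "(c - r, c) \<in> isa_cob m r X P" and p: "(c - r, p) \<in> earlier P r"
  have "(\<Sum>k\<in>{1..m}. X t k * isa_N m r X P k c) = X t p * isa_N m r X P p c"
  proof (rule sum_single)
    show "X t k * isa_N m r X P k c = 0" if "k \<in> {1..m}" "k \<noteq> p" for k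
      using nz[where a=k and b=c] pivot_setD(2)[OF P p] that by auto
  qed (use pivot_setD(1)[OF P p] in auto)
  moreover have "isa_N m r X P p c = X (c - r) c / X (c - r) p"
    using cob ppcol_eq[OF P p] unfolding isa_N_def by simp
  ultimately show "mmult m X (isa_T m r X P) t c = X t c - X (c - r) c / X (c - r) p * X t p"
    unfolding prod by (simp add: mult.commute)
qed

text \<open>In a column with a change-of-basis pivot, the entry at the pivot is cancelled
  against the primary pivot in its row, and the entries below stay zero because the
  column of that primary pivot vanishes below it.\<close>

lemma isa_product_cob_column:
  fixes X :: "('a::field) mtx"
  assumes r: "1 \<le> r" and P: "pivot_set m r (earlier P r)" and X: "swept m r (earlier P r) X"
    and cob: "(c - r, c) \<in> isa_cob m r X P" and t: "t \<in> {1..m}" "c - t \<le> r"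
  shows "mmult m X (isa_T m r X P) t c = 0"
proof -
  have c: "r < c" "c \<in> {1..m}" "col_free (earlier P r) c" and "\<not> row_free (earlier P r) (c - r)"
    using cob unfolding isa_cob_iff cand_iff by auto
  then obtain p where p: "(c - r, p) \<in> earlier P r" unfolding row_free_def by blast
  have p_lowest: "X (c - r) p \<noteq> 0" "\<And>k. k \<in> {1..m} \<Longrightarrow> c - r < k \<Longrightarrow> X k p = 0"
    using sweptD(2)[OF X p] by auto
  have Bt: "mmult m X (isa_T m r X P) t c = X t c - X (c - r) c / X (c - r) p * X t p"
    by (rule isa_product_column(2)[OF P c(2) cob p])
  show ?thesis
  proof (cases "t = c - r")
    case True
    then show ?thesis using Bt p_lowest(1) by simp
  next
    case False
    then have "c - t < r \<and> c - r < t" using t(2) c(1) r by arith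
    then show ?thesis using Bt sweptD(1)[OF X c(2) t(1) c(3)] p_lowest(2) t(1) by auto
  qed
qed

text \<open>After the change of basis the matrix is swept one diagonal further, with the
  primary pivots of iteration r added: change-of-basis pivots have been cancelled,
  the remaining columns are unchanged, and new primary pivots are lowest nonzero
  entries because everything below them was already swept.\<close>

lemma swept_isa_product:
  fixes X :: "('a::field) mtx"
  assumes r: "1 \<le> r" and P: "pivot_set m r (earlier P r)" and X: "swept m r (earlier P r) X"
  shows "swept m (Suc r) (earlier P r \<union> isa_prim m r X P) (mmult m X (isa_T m r X P))"
proof -
  define PP where "PP = earlier P r"
  define B where "B = mmult m X (isa_T m r X P)"
  have unchanged: "B t c = X t c" if "c \<in> {1..m}" "(c - r, c) \<notin> isa_cob m r X P" for t c
    using isa_product_column(1)[OF P that] unfolding B_def .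
  have free: "B t c = 0"
    if c: "c \<in> {1..m}" and t: "t \<in> {1..m}" and fc: "col_free (PP \<union> isa_prim m r X P) c"
      and ct: "c - t < Suc r" for c t
  proof (cases "(c - r, c) \<in> isa_cob m r X P")
    case True
    then show ?thesis using isa_product_cob_column[OF r P X True t] ct unfolding B_def by simp
  next
    case False
    have fc0: "col_free PP c" using fc unfolding col_free_def by auto
    have "X t c = 0"
    proof (cases "c - t < r")
      case True
      then show ?thesis using sweptD(1)[OF X c t] fc0 unfolding PP_def by simp
    next
      case outside: False
      then have tc: "t = c - r" "r < c" using ct r t by auto
      have "(c - r, c) \<notin> isa_prim m r X P" using fc unfolding col_free_def by auto
      then have "(c - r, c) \<notin> cand m r X P" using False unfolding isa_prim_def by auto
      then show ?thesis unfolding cand_iff using tc c fc0 PP_def by auto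
    qed
    then show ?thesis using unchanged[OF c False] by simp
  qed
  have pivot: "B h l \<noteq> 0 \<and> (\<forall>k\<in>{1..m}. h < k \<longrightarrow> B k l = 0)"
    if hl: "(h,l) \<in> PP \<union> isa_prim m r X P" for h l
  proof -
    have "(h,l) \<in> earlier P r \<union> cand m r X P" using hl unfolding PP_def isa_prim_def by auto
    note lowest = pivot_lowest[OF r P X this]
    have "(l - r, l) \<notin> isa_cob m r X P"
      using hl
    proof (elim UnE)
      assume "(h,l) \<in> PP"
      then show ?thesis unfolding isa_cob_iff cand_iff col_free_def PP_def by blast
    next
      assume "(h,l) \<in> isa_prim m r X P"
      then show ?thesis unfolding isa_prim_iff isa_cob_iff cand_iff by auto
    qed
    then show ?thesis using lowest unchanged[of l] by auto
  qed
  have "swept m (Suc r) (PP \<union> isa_prim m r X P) B"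
    unfolding swept_def using free pivot by blast
  then show ?thesis unfolding B_def PP_def .
qed

lemma isa_step_swept:
  fixes X :: "('a::field) mtx"
  assumes r: "1 \<le> r" and P: "pivot_set m r (earlier P r)" and X: "swept m r (earlier P r) X"
    and sX: "msupp m X"
  defines "T \<equiv> isa_T m r X P"
  shows "swept m (Suc r) (earlier P r \<union> isa_prim m r X P) (mmult m (mmult m (minv m T) X) T)"
    and "msupp m (mmult m (mmult m (minv m T) X) T)"
proof -
  note T = isa_T_props[OF r P, where X=X, folded T_def]
  have assoc: "mmult m (mmult m (minv m T) X) T = mmult m (minv m T) (mmult m X T)"
    by (rule mmult_assoc)
  show "swept m (Suc r) (earlier P r \<union> isa_prim m r X P) (mmult m (mmult m (minv m T) X) T)"
    unfolding assoc
    using swept_unitri_mult[OF T(2) pivot_set_isa_prim[OF r P] swept_isa_product[OF r P X, folded T_def]] .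
  have "msupp m T" "msupp m (minv m T)" using T(1,2) unfolding unitri_def by auto
  then show "msupp m (mmult m (mmult m (minv m T) X) T)"
    using sX by (intro msupp_mult)
qed
section \<open>One iteration of the Row Cancellation Algorithm\<close>

text \<open>The factor for a marked column j replaces row j of the identity: it subtracts
  from every later column q the multiple of column j that cancels the entry
  (j - r, q) against the pivot (j - r, j).\<close>

lemma rca_Ts_eq:
  "rca_Ts m r Y j = (\<lambda>a b. mid m a b -
      (if a = j \<and> b \<in> {j+1..m} then Y (j - r) b / Y (j - r) j else (0::'a::field)))"
proof (intro ext)
  fix a b
  have "(\<Sum>q\<in>{j+1..m}. Y (j - r) q / Y (j - r) j * Umat j q a b)
      = (\<Sum>q\<in>{j+1..m}. if q = b then (if a = j then Y (j - r) b / Y (j - r) j else 0) else 0)"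
    by (rule sum.cong) (auto simp: Umat_def)
  also have "\<dots> = (if a = j \<and> b \<in> {j+1..m} then Y (j - r) b / Y (j - r) j else 0)"
    by (cases "a = j") (simp_all add: sum.delta)
  finally show "rca_Ts m r Y j a b =
      mid m a b - (if a = j \<and> b \<in> {j+1..m} then Y (j - r) b / Y (j - r) j else 0)"
    unfolding rca_Ts_def by simp
qed

definition rows_identity :: "nat \<Rightarrow> nat set \<Rightarrow> ('a::field) mtx \<Rightarrow> bool" where
  "rows_identity m S A \<longleftrightarrow> (\<forall>a t. a \<notin> S \<longrightarrow> A a t = mid m a t)"

lemma rows_identity_mult:
  assumes "rows_identity m S A" "rows_identity m S' B"
  shows "rows_identity m (S \<union> S') (mmult m A B)"
  unfolding rows_identity_def
proof (intro allI impI)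
  fix a t assume a: "a \<notin> S \<union> S'"
  have "mmult m A B a t = (\<Sum>k\<in>{1..m}. mid m a k * B k t)"
    unfolding mmult_def using assms(1) a unfolding rows_identity_def by auto
  also have "\<dots> = mid m a t"
    unfolding sum_mid_left using assms(2) a unfolding rows_identity_def mid_def by auto
  finally show "mmult m A B a t = mid m a t" .
qed

lemma rca_Ts_props:
  fixes Y :: "('a::field) mtx"
  assumes j: "j \<in> {1..m}"
  shows "unitri m (rca_Ts m r Y j)" "\<exists>S. is_inverse m (rca_Ts m r Y j) S \<and> unitri m S"
    "rows_identity m {j} (rca_Ts m r Y j)"
proof -
  define N where "N a b = (if a = j \<and> b \<in> {j+1..m} then Y (j - r) b / Y (j - r) j else 0)" for a b
  have TN: "rca_Ts m r Y j = (\<lambda>a b. mid m a b - N a b)" unfolding rca_Ts_eq N_def by simp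
  have sN: "msupp m N" unfolding msupp_def N_def using j by auto
  have lN: "\<And>a b. b \<le> a \<Longrightarrow> N a b = 0" unfolding N_def by auto
  have NN: "mmult m N N = mzero" unfolding mmult_def mzero_def N_def
    by (intro ext sum.neutral) auto
  show "unitri m (rca_Ts m r Y j)" unfolding TN by (rule unitri_id_minus(1)[OF sN lN])
  show "\<exists>S. is_inverse m (rca_Ts m r Y j) S \<and> unitri m S" unfolding TN
    using is_inverse_square_zero[OF sN NN] unitri_id_minus(2)[OF sN lN] by blast
  show "rows_identity m {j} (rca_Ts m r Y j)" unfolding rows_identity_def TN N_def by auto
qed

lemma mult_rca_Ts:
  fixes C Y :: "('a::field) mtx"
  assumes j: "j \<in> {1..m}" and q: "q \<in> {1..m}"
  shows "mmult m C (rca_Ts m r Y j) x q =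
           C x q - C x j * (if q \<in> {j+1..m} then Y (j - r) q / Y (j - r) j else 0)"
proof -
  have "mmult m C (rca_Ts m r Y j) x q = (\<Sum>k\<in>{1..m}. C x k * mid m k q)
     - (\<Sum>k\<in>{1..m}. C x k * (if k = j \<and> q \<in> {j+1..m} then Y (j - r) q / Y (j - r) j else 0))"
    unfolding mmult_def rca_Ts_eq by (simp add: algebra_simps sum_subtractf)
  also have "(\<Sum>k\<in>{1..m}. C x k * mid m k q) = C x q" using q by (simp only: sum_mid_right) simp
  also have "(\<Sum>k\<in>{1..m}. C x k * (if k = j \<and> q \<in> {j+1..m} then Y (j - r) q / Y (j - r) j else 0))
      = C x j * (if q \<in> {j+1..m} then Y (j - r) q / Y (j - r) j else 0)"
    by (subst sum_single[where k=j]) (use j in auto)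
  finally show ?thesis .
qed

lemma rca_Ts_clears_own_row:
  fixes C Y :: "('a::field) mtx"
  assumes j: "j \<in> {1..m}" and piv: "Y (j - r) j \<noteq> 0" and q: "q \<in> {j+1..m}"
    and agree: "C (j - r) q = Y (j - r) q" "C (j - r) j = Y (j - r) j"
  shows "mmult m C (rca_Ts m r Y j) (j - r) q = 0"
  using mult_rca_Ts[OF j, of q C r Y "j - r"] q agree piv by auto

definition rca_prod :: "nat \<Rightarrow> nat \<Rightarrow> ('a::field) mtx \<Rightarrow> nat list \<Rightarrow> 'a mtx" where
  "rca_prod m r Y ls = foldr (\<lambda>j A. mmult m (rca_Ts m r Y j) A) ls (mid m)"

lemma rca_prod_props:
  fixes Y :: "('a::field) mtx"
  assumes "set ls \<subseteq> {1..m}"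
  shows "unitri m (rca_prod m r Y ls) \<and> (\<exists>S. is_inverse m (rca_prod m r Y ls) S \<and> unitri m S) \<and>
         rows_identity m (set ls) (rca_prod m r Y ls)"
  using assms
proof (induction ls)
  case Nil
  then show ?case unfolding rca_prod_def
    using unitri_mid[of m] is_inverse_mid by (auto simp: rows_identity_def)
next
  case (Cons j ls)
  have j: "j \<in> {1..m}" using Cons.prems by auto
  have IH: "unitri m (rca_prod m r Y ls)" "\<exists>S. is_inverse m (rca_prod m r Y ls) S \<and> unitri m S"
    "rows_identity m (set ls) (rca_prod m r Y ls)"
    using Cons by auto
  have prod: "rca_prod m r Y (j # ls) = mmult m (rca_Ts m r Y j) (rca_prod m r Y ls)"
    unfolding rca_prod_def by simp
  obtain S1 where S1: "is_inverse m (rca_Ts m r Y j) S1" "unitri m S1" using rca_Ts_props(2)[OF j] by blast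
  obtain S2 where S2: "is_inverse m (rca_prod m r Y ls) S2" "unitri m S2" using IH by blast
  have "msupp m (rca_Ts m r Y j)" "msupp m (rca_prod m r Y ls)"
    using rca_Ts_props(1)[OF j] IH(1) unfolding unitri_def by auto
  then have "is_inverse m (rca_prod m r Y (j # ls)) (mmult m S2 S1)"
    unfolding prod by (rule is_inverse_mult[OF S1(1) S2(1)])
  moreover have "unitri m (mmult m S2 S1)" by (rule unitri_mult[OF S2(2) S1(2)])
  moreover have "unitri m (rca_prod m r Y (j # ls))"
    unfolding prod by (rule unitri_mult[OF rca_Ts_props(1)[OF j] IH(1)])
  moreover have "rows_identity m (set (j # ls)) (rca_prod m r Y (j # ls))"
    unfolding prod using rows_identity_mult[OF rca_Ts_props(3)[OF j] IH(3)] by simp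
  ultimately show ?case by blast
qed

lemma rca_prod_keeps_row:
  fixes C Y :: "('a::field) mtx"
  assumes "set ls \<subseteq> {1..m}" "\<forall>t\<in>set ls. C x t = 0" "q \<in> {1..m}"
  shows "mmult m C (rca_prod m r Y ls) x q = C x q"
  using assms
proof (induction ls arbitrary: C)
  case Nil
  then show ?case unfolding rca_prod_def foldr.simps(1) id_apply mmult_def sum_mid_right by simp
next
  case (Cons j ls)
  have j: "j \<in> {1..m}" using Cons.prems by auto
  have row: "mmult m C (rca_Ts m r Y j) x t = C x t" if "t \<in> {1..m}" for t
    using mult_rca_Ts[OF j that, of C r Y x] Cons.prems(2) by simp
  have "mmult m C (rca_prod m r Y (j # ls)) = mmult m (mmult m C (rca_Ts m r Y j)) (rca_prod m r Y ls)"
    unfolding rca_prod_def by (simp add: mmult_assoc)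
  moreover have "mmult m (mmult m C (rca_Ts m r Y j)) (rca_prod m r Y ls) x q = mmult m C (rca_Ts m r Y j) x q"
    by (rule Cons.IH) (use Cons.prems row in auto)
  ultimately show ?case using row Cons.prems by simp
qed

text \<open>The product clears the rows j - r of the marked columns j to the right of column j,
  provided the pivot rows vanish in the earlier marked columns: each factor clears its
  own row and, by the latter condition, leaves the rows of the other marked columns
  alone.\<close>

lemma rca_prod_clears_rows:
  fixes C Y :: "('a::field) mtx"
  assumes "sorted_wrt (<) ls" "set ls \<subseteq> {1..m}" "\<forall>s\<in>set ls. Y (s - r) s \<noteq> 0"
    "\<forall>s\<in>set ls. \<forall>q\<in>{s..m}. C (s - r) q = Y (s - r) q"
    "\<forall>s\<in>set ls. \<forall>t\<in>set ls. t < s \<longrightarrow> C (s - r) t = 0"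
  shows "\<forall>s\<in>set ls. \<forall>q\<in>{s+1..m}. mmult m C (rca_prod m r Y ls) (s - r) q = 0"
  using assms
proof (induction ls arbitrary: C)
  case Nil
  then show ?case by simp
next
  case (Cons j ls)
  have j: "j \<in> {1..m}" using Cons.prems by auto
  have gt: "\<forall>t\<in>set ls. j < t" using Cons.prems(1) by simp
  define C1 where "C1 = mmult m C (rca_Ts m r Y j)"
  have eq: "mmult m C (rca_prod m r Y (j # ls)) = mmult m C1 (rca_prod m r Y ls)"
    unfolding rca_prod_def C1_def by (simp add: mmult_assoc)
  have C1: "C1 x q = C x q - C x j * (if q \<in> {j+1..m} then Y (j - r) q / Y (j - r) j else 0)"
    if "q \<in> {1..m}" for x q
    unfolding C1_def by (rule mult_rca_Ts[OF j that])
  have own_row: "C1 (j - r) q = 0" if q: "q \<in> {j+1..m}" for q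
    unfolding C1_def using Cons.prems(3,4) q j by (intro rca_Ts_clears_own_row) auto
  have other_rows: "C1 (s - r) q = C (s - r) q" if "s \<in> set ls" "q \<in> {1..m}" for s q
    using C1 Cons.prems(5) gt that by auto
  have IH: "\<forall>s\<in>set ls. \<forall>q\<in>{s+1..m}. mmult m C1 (rca_prod m r Y ls) (s - r) q = 0"
  proof (rule Cons.IH)
    show "sorted_wrt (<) ls" "set ls \<subseteq> {1..m}" "\<forall>s\<in>set ls. Y (s - r) s \<noteq> 0"
      using Cons.prems(1-3) by auto
    show "\<forall>s\<in>set ls. \<forall>q\<in>{s..m}. C1 (s - r) q = Y (s - r) q"
    proof (intro ballI)
      fix s q assume s: "s \<in> set ls" and q: "q \<in> {s..m}"
      have "q \<in> {1..m}" using q s Cons.prems(2) by auto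
      then show "C1 (s - r) q = Y (s - r) q" using other_rows s Cons.prems(4) q by auto
    qed
    show "\<forall>s\<in>set ls. \<forall>t\<in>set ls. t < s \<longrightarrow> C1 (s - r) t = 0"
      using other_rows Cons.prems(2,5) by auto
  qed
  show ?case
  proof (intro ballI)
    fix s q assume s: "s \<in> set (j # ls)" and q: "q \<in> {s+1..m}"
    show "mmult m C (rca_prod m r Y (j # ls)) (s - r) q = 0"
    proof (cases "s = j")
      case True
      have "mmult m C1 (rca_prod m r Y ls) (j - r) q = C1 (j - r) q"
      proof (rule rca_prod_keeps_row)
        show "set ls \<subseteq> {1..m}" "q \<in> {1..m}" using Cons.prems(2) q True j by auto
        show "\<forall>t\<in>set ls. C1 (j - r) t = 0"
        proof
          fix t assume "t \<in> set ls"
          then have "j < t" "t \<le> m" using gt Cons.prems(2) by auto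
          then show "C1 (j - r) t = 0" by (intro own_row) auto
        qed
      qed
      then show ?thesis using eq own_row q True by simp
    next
      case False
      then show ?thesis using IH s q eq by auto
    qed
  qed
qed

lemma pivot_row_support:
  fixes Y :: "('a::field) mtx"
  assumes P: "pivot_set m r PP" and Y: "swept m r PP Y" and R: "rows_cleared m PP Y"
    and gh: "(g,h) \<in> PP" and k: "k \<in> {1..m}" "k \<noteq> h" and nz: "Y g k \<noteq> 0"
  shows "\<exists>g'. (g',k) \<in> PP \<and> g < g'"
proof -
  note P1 = pivot_setD(1)[OF P]
  have "k < h" using R gh k nz unfolding rows_cleared_def by (meson linorder_neqE_nat)
  have "\<not> col_free PP k"
  proof
    assume "col_free PP k"
    moreover have "k - g < r" using \<open>k < h\<close> P1[OF gh] by arith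
    ultimately show False using sweptD(1)[OF Y k(1)] P1[OF gh] nz by auto
  qed
  then obtain g' where g': "(g',k) \<in> PP" unfolding col_free_def by auto
  have "g' \<noteq> g" using pivot_setD(2)[OF P gh] g' k by blast
  moreover have "\<not> g' < g" using sweptD(2)[OF Y g'] P1[OF gh] nz by auto
  ultimately show ?thesis using g' by auto
qed

text \<open>For a swept matrix with cleared pivot rows and square zero, the row whose index is
  a pivot column vanishes: in (Y Y) at (g, q) the pivot (g, h) is the only entry of row g
  meeting a nonzero row, by descending induction on g.\<close>

lemma pivot_column_row_zero:
  fixes Y :: "('a::field) mtx"
  assumes P: "pivot_set m r PP" and Y: "swept m r PP Y"
    and R: "rows_cleared m PP Y" and sY: "msupp m Y" and YY: "mmult m Y Y = mzero"
  shows "(g,h) \<in> PP \<Longrightarrow> Y h q = 0"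
proof (induction "m - g" arbitrary: g h q rule: less_induct)
  case less
  have gh: "1 \<le> g" "g < h" "h \<le> m" using pivot_setD(1)[OF P less.prems] by auto
  show ?case
  proof (cases "q \<in> {1..m}")
    case False
    then show ?thesis using sY unfolding msupp_def by auto
  next
    case True
    have "0 = mmult m Y Y g q" using YY unfolding mzero_def by simp
    also have "mmult m Y Y g q = Y g h * Y h q"
      unfolding mmult_def
    proof (rule sum_single)
      fix k assume k: "k \<in> {1..m}" "k \<noteq> h"
      show "Y g k * Y k q = 0"
      proof (cases "Y g k = 0")
        case False
        then obtain g' where "(g',k) \<in> PP" "g < g'"
          using pivot_row_support[OF P Y R less.prems k] by blast
        moreover from this have "m - g' < m - g" using pivot_setD(1)[OF P] by fastforce
        ultimately show ?thesis using less.hyps by auto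
      qed simp
    qed (use gh in auto)
    finally have "Y g h * Y h q = 0" by simp
    then show ?thesis using sweptD(2)[OF Y less.prems] by simp
  qed
qed

text \<open>If (j - r, j) is a candidate of the RCA markup, then row j contains no lowest
  nonzero entry of any column l: otherwise (Y Y) at (j - r, l) would be the nonzero
  product of the candidate entry and that entry.\<close>

lemma candidate_row_not_lowest:
  fixes m r :: nat and Y :: "('a::field) mtx" and Q :: "nat \<Rightarrow> (nat \<times> nat) set"
  defines "PP \<equiv> earlier Q r"
  assumes r: "1 \<le> r" and P: "pivot_set m r PP" and Y: "swept m r PP Y"
    and R: "rows_cleared m PP Y" and sY: "msupp m Y" and YY: "mmult m Y Y = mzero"
    and cand: "(j - r, j) \<in> cand m r Y Q" and l: "l \<in> {1..m}" and nz: "Y j l \<noteq> 0"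
    and below: "\<And>k. k \<in> {1..m} \<Longrightarrow> j < k \<Longrightarrow> Y k l = 0"
  shows False
proof -
  note Y1 = sweptD(1)[OF Y]
  have j: "r < j" "j \<le> m" "Y (j - r) j \<noteq> 0" using cand unfolding cand_iff by auto
  have "0 = mmult m Y Y (j - r) l" using YY unfolding mzero_def by simp
  also have "mmult m Y Y (j - r) l = Y (j - r) j * Y j l"
    unfolding mmult_def
  proof (rule sum_single)
    fix k assume k: "k \<in> {1..m}" "k \<noteq> j"
    show "Y (j - r) k * Y k l = 0"
    proof (cases "j < k")
      case True then show ?thesis using below k by simp
    next
      case False
      then have kj: "k < j" using k by simp
      show ?thesis
      proof (cases "col_free PP k")
        case True
        have "k - (j - r) < r" using kj j r by arith
        moreover have "j - r \<in> {1..m}" using j by auto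
        ultimately show ?thesis using Y1[of k "j - r"] True k by auto
      next
        case False
        then obtain g where "(g,k) \<in> PP" unfolding col_free_def by auto
        then show ?thesis using pivot_column_row_zero[OF P Y R sY YY] by auto
      qed
    qed
  qed (use j in auto)
  finally show False using j nz by simp
qed

lemma rca_marked_iff: "s \<in> snd ` cand m r Y Q \<longleftrightarrow> (s - r, s) \<in> cand m r Y Q"
  unfolding cand_def by force

lemma rca_marked_bounds: "s \<in> snd ` cand m r Y Q \<Longrightarrow> r < s \<and> s \<le> m"
  unfolding rca_marked_iff cand_iff by auto

lemma rca_T_eq: "rca_T m r Y Q = rca_prod m r Y (sorted_list_of_set (snd ` cand m r Y Q))"
  unfolding rca_T_def rca_prod_def ..

lemma rca_T_props:
  fixes m r :: nat and Y :: "('a::field) mtx" and Q :: "nat \<Rightarrow> (nat \<times> nat) set"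
  defines "T \<equiv> rca_T m r Y Q" and "JS \<equiv> snd ` cand m r Y Q"
  shows "unitri m T" "unitri m (minv m T)" "is_inverse m T (minv m T)"
    "rows_identity m JS T" "rows_identity m JS (minv m T)"
proof -
  have JS: "JS \<subseteq> {1..m}" using rca_marked_bounds unfolding JS_def by fastforce
  then have "finite JS" using finite_subset by blast
  then have set_js: "set (sorted_list_of_set JS) = JS" by simp
  have "unitri m T \<and> (\<exists>S. is_inverse m T S \<and> unitri m S) \<and> rows_identity m JS T"
    using rca_prod_props[of "sorted_list_of_set JS" m r Y] JS set_js
    unfolding T_def JS_def rca_T_eq by simp
  then obtain S where T: "unitri m T" "rows_identity m JS T" and S: "is_inverse m T S" "unitri m S"
    by blast
  have minv: "minv m T = S" by (rule minv_eq[OF S(1)])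
  show "unitri m T" "rows_identity m JS T" by (fact T)+
  show "unitri m (minv m T)" "is_inverse m T (minv m T)" unfolding minv by (fact S(2), fact S(1))
  have "S a c = mid m a c" if a: "a \<notin> JS" for a c
  proof (cases "a \<in> {1..m}")
    case True
    have "mid m a c = mmult m T S a c" using S unfolding is_inverse_def by simp
    also have "\<dots> = (\<Sum>k\<in>{1..m}. mid m a k * S k c)"
      unfolding mmult_def using T(2) a unfolding rows_identity_def by simp
    also have "\<dots> = S a c" unfolding sum_mid_left using True by simp
    finally show ?thesis by simp
  next
    case False
    then show ?thesis using S unfolding is_inverse_def msupp_def mid_def by auto
  qed
  then show "rows_identity m JS (minv m T)" unfolding minv rows_identity_def by blast
qed

lemma mult_rows_identity_entry:
  fixes Y T :: "('a::field) mtx"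
  assumes T: "unitri m T" "rows_identity m JS T" and c: "c \<in> {1..m}"
    and zero: "\<And>s. s \<in> JS \<Longrightarrow> s < c \<Longrightarrow> Y k s = 0"
  shows "mmult m Y T k c = Y k c"
proof -
  have lT: "\<And>a b. b < a \<Longrightarrow> T a b = 0" and dT: "\<And>a. a \<in> {1..m} \<Longrightarrow> T a a = 1"
    using T(1) unfolding unitri_def by auto
  have "mmult m Y T k c = Y k c * T c c"
    unfolding mmult_def
  proof (rule sum_single)
    fix t assume t: "t \<in> {1..m}" "t \<noteq> c"
    show "Y k t * T t c = 0"
    proof (cases "t \<in> JS")
      case False
      then show ?thesis using T(2) t unfolding rows_identity_def mid_def by auto
    next
      case True
      then show ?thesis using zero[of t] lT[of c t] t by (cases "t < c") auto
    qed
  qed (use c in auto)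
  then show ?thesis using dT c by simp
qed
text \<open>The columns involved are
  unchanged, because in the relevant rows the matrix vanishes in all marked columns.\<close>

lemma swept_rca_product:
  fixes m r :: nat and Y :: "('a::field) mtx" and Q :: "nat \<Rightarrow> (nat \<times> nat) set"
  defines "PP \<equiv> earlier Q r" and "T \<equiv> rca_T m r Y Q"
  assumes r: "1 \<le> r" and P: "pivot_set m r PP" and Y: "swept m r PP Y"
  shows "swept m (Suc r) (PP \<union> cand m r Y Q) (mmult m Y T)"
proof -
  define new where "new = cand m r Y Q"
  define JS where "JS = snd ` new"
  note Y1 = sweptD(1)[OF Y]
  have newD: "r < l \<and> l \<le> m \<and> h = l - r \<and> Y h l \<noteq> 0 \<and> col_free PP l" if "(h,l) \<in> new" for h l
    using that unfolding new_def cand_iff PP_def by auto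
  have JSD: "s \<in> {1..m} \<and> col_free PP s" if "s \<in> JS" for s
    using that newD[of "s - r" s] unfolding JS_def new_def rca_marked_iff by auto
  have T: "unitri m T" "rows_identity m JS T"
    using rca_T_props unfolding T_def JS_def new_def by blast+
  have unchanged: "mmult m Y T t c = Y t c"
    if "c \<in> {1..m}" "t \<in> {1..m}" "c - t \<le> r" for c t
  proof (rule mult_rows_identity_entry[OF T that(1)])
    fix s assume s: "s \<in> JS" "s < c"
    have "s - t < r" using s(2) that(3) r by arith
    then show "Y t s = 0" using Y1 JSD[OF s(1)] that(2) by blast
  qed
  have free: "mmult m Y T t c = 0"
    if c: "c \<in> {1..m}" and t: "t \<in> {1..m}" and fc: "col_free (PP \<union> new) c"
      and ct: "c - t < Suc r" for c t
  proof -
    have fc0: "col_free PP c" using fc unfolding col_free_def by auto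
    have "Y t c = 0"
    proof (cases "c - t < r")
      case True
      then show ?thesis using Y1 c t fc0 by blast
    next
      case False
      then have "t = c - r \<and> r < c" using t ct r by auto
      moreover have "(c - r, c) \<notin> new" using fc unfolding col_free_def by auto
      ultimately show ?thesis using c fc0 unfolding new_def cand_iff PP_def by auto
    qed
    then show ?thesis using unchanged c t ct by simp
  qed
  have pivot: "mmult m Y T h l \<noteq> 0 \<and> (\<forall>k\<in>{1..m}. h < k \<longrightarrow> mmult m Y T k l = 0)"
    if hl: "(h,l) \<in> PP \<union> new" for h l
  proof -
    have "l - h \<le> r" using hl pivot_setD(1)[OF P, of h l] newD[of h l] by auto
    moreover note lowest = pivot_lowest[OF r P[unfolded PP_def] Y[unfolded PP_def] hl[unfolded PP_def new_def]]
    ultimately have "mmult m Y T k l = Y k l" if "k \<in> {1..m}" "h \<le> k" for k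
      using unchanged[of l k] that by auto
    then show ?thesis using lowest by auto
  qed
  show ?thesis
    unfolding swept_def using free pivot unfolding new_def by blast
qed

lemma rca_product_clears_marked_rows:
  fixes m r :: nat and Y :: "('a::field) mtx" and Q :: "nat \<Rightarrow> (nat \<times> nat) set"
  defines "PP \<equiv> earlier Q r"
  assumes r: "1 \<le> r" and Y: "swept m r PP Y"
    and j: "(j - r, j) \<in> cand m r Y Q" and q: "q \<in> {j+1..m}"
  shows "mmult m Y (rca_T m r Y Q) (j - r) q = 0"
proof -
  define JS where "JS = snd ` cand m r Y Q"
  define js where "js = sorted_list_of_set JS"
  have JSD: "r < s \<and> s \<le> m \<and> Y (s - r) s \<noteq> 0 \<and> col_free PP s" if "s \<in> JS" for s
    using that unfolding JS_def rca_marked_iff cand_iff PP_def by auto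
  have "finite JS" using JSD by (metis finite_nat_set_iff_bounded_le)
  then have set_js: "set js = JS" unfolding js_def by simp
  have "\<forall>s\<in>set js. \<forall>q\<in>{s+1..m}. mmult m Y (rca_prod m r Y js) (s - r) q = 0"
  proof (rule rca_prod_clears_rows)
    show "sorted_wrt (<) js" unfolding js_def by (rule strict_sorted_list_of_set)
    show "set js \<subseteq> {1..m}" "\<forall>s\<in>set js. Y (s - r) s \<noteq> 0"
      using set_js JSD r by (fastforce, blast)
    show "\<forall>s\<in>set js. \<forall>q\<in>{s..m}. Y (s - r) q = Y (s - r) q" by simp
    show "\<forall>s\<in>set js. \<forall>t\<in>set js. t < s \<longrightarrow> Y (s - r) t = 0"
    proof (intro ballI impI)
      fix s t assume s: "s \<in> set js" and t: "t \<in> set js" and ts: "t < s"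
      have "t - (s - r) < r" "s - r \<in> {1..m}" "t \<in> {1..m}"
        using ts JSD[of s] JSD[of t] s t set_js r by auto
      then show "Y (s - r) t = 0" using sweptD(1)[OF Y] JSD[of t] t set_js by blast
    qed
  qed
  moreover have "j \<in> set js" using j set_js rca_marked_iff unfolding JS_def by blast
  ultimately show ?thesis using q unfolding rca_T_eq js_def JS_def by blast
qed

text \<open>Pivot rows are never rows of marked columns: a pivot is a lowest nonzero entry
  of its column, which a candidate row cannot contain.\<close>

lemma pivot_rows_not_marked:
  fixes m r :: nat and Y :: "('a::field) mtx" and Q :: "nat \<Rightarrow> (nat \<times> nat) set"
  defines "PP \<equiv> earlier Q r"
  assumes r: "1 \<le> r" and P: "pivot_set m r PP" and Y: "swept m r PP Y"
    and R: "rows_cleared m PP Y" and sY: "msupp m Y" and YY: "mmult m Y Y = mzero"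
    and hl: "(h,l) \<in> PP \<union> cand m r Y Q"
  shows "h \<notin> snd ` cand m r Y Q"
proof
  assume "h \<in> snd ` cand m r Y Q"
  then have "(h - r, h) \<in> cand m r Y Q" unfolding rca_marked_iff .
  moreover note lowest = pivot_lowest[OF r P[unfolded PP_def] Y[unfolded PP_def] hl[unfolded PP_def]]
  ultimately show False
    using candidate_row_not_lowest[OF r P[unfolded PP_def] Y[unfolded PP_def] R[unfolded PP_def] sY YY]
    by (metis atLeastAtMost_iff order.trans less_imp_le_nat)
qed

text \<open>Old pivot rows are unchanged to the right of their pivot by the RCA change of
  basis, and hence stay zero there: they vanish in all marked columns.\<close>

lemma rca_product_old_pivot_row:
  fixes m r :: nat and Y :: "('a::field) mtx" and Q :: "nat \<Rightarrow> (nat \<times> nat) set"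
  defines "PP \<equiv> earlier Q r" and "T \<equiv> rca_T m r Y Q"
  assumes r: "1 \<le> r" and P: "pivot_set m r PP" and Y: "swept m r PP Y"
    and R: "rows_cleared m PP Y"
    and hl: "(h,l) \<in> PP" and q: "q \<in> {1..m}" "l < q"
  shows "mmult m Y T h q = 0"
proof -
  define JS where "JS = snd ` cand m r Y Q"
  note P1 = pivot_setD(1)[OF P]
  note T = rca_T_props[of m r Y Q, folded T_def, folded JS_def]
  have JSD: "s \<in> {1..m} \<and> col_free PP s" if "s \<in> JS" for s
    using that unfolding JS_def rca_marked_iff cand_iff PP_def by auto
  have "mmult m Y T h q = Y h q"
  proof (rule mult_rows_identity_entry[OF T(1,4) q(1)])
    fix s assume s: "s \<in> JS" "s < q"
    have "s \<noteq> l" using JSD[OF s(1)] hl unfolding col_free_def by auto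
    show "Y h s = 0"
    proof (cases "l < s")
      case True
      then show ?thesis using R hl JSD[OF s(1)] unfolding rows_cleared_def by blast
    next
      case False
      then have "s - h < r" using \<open>s \<noteq> l\<close> P1[OF hl] by arith
      then show ?thesis using sweptD(1)[OF Y] JSD[OF s(1)] P1[OF hl] by auto
    qed
  qed
  also have "Y h q = 0" using R hl q unfolding rows_cleared_def by blast
  finally show ?thesis .
qed

text \<open>The RCA iteration keeps pivot rows cleared: pivot rows are not modified by the
  inverse change of basis, old pivot rows stay zero, and new pivot rows have just been
  cleared.\<close>

lemma rows_cleared_rca_step:
  fixes m r :: nat and Y :: "('a::field) mtx" and Q :: "nat \<Rightarrow> (nat \<times> nat) set"
  defines "PP \<equiv> earlier Q r" and "T \<equiv> rca_T m r Y Q"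
  assumes r: "1 \<le> r" and P: "pivot_set m r PP" and Y: "swept m r PP Y"
    and R: "rows_cleared m PP Y" and sY: "msupp m Y" and YY: "mmult m Y Y = mzero"
  shows "rows_cleared m (PP \<union> cand m r Y Q) (mmult m (minv m T) (mmult m Y T))"
proof -
  define JS where "JS = snd ` cand m r Y Q"
  note T = rca_T_props[of m r Y Q, folded T_def, folded JS_def]
  have old_row: "mmult m Y T h q = 0" if "(h,l) \<in> PP" "q \<in> {1..m}" "l < q" for h l q
    unfolding T_def PP_def
    using rca_product_old_pivot_row[OF r P[unfolded PP_def] Y[unfolded PP_def] R[unfolded PP_def]]
      that[unfolded PP_def] by blast
  have new_row: "mmult m Y T h q = 0" if "(h,l) \<in> cand m r Y Q" "q \<in> {1..m}" "l < q" for h l q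
  proof -
    have "(l - r, l) \<in> cand m r Y Q" "h = l - r" "q \<in> {l+1..m}"
      using that unfolding cand_iff by auto
    then show ?thesis
      unfolding T_def using rca_product_clears_marked_rows[OF r Y[unfolded PP_def]] by blast
  qed
  have "mmult m (minv m T) (mmult m Y T) h q = 0"
    if hl: "(h,l) \<in> PP \<union> cand m r Y Q" and q: "q \<in> {1..m}" "l < q" for h l q
  proof -
    have "h \<notin> JS" unfolding JS_def PP_def
      by (rule pivot_rows_not_marked[OF r P[unfolded PP_def] Y[unfolded PP_def] R[unfolded PP_def]
            sY YY hl[unfolded PP_def]])
    then have "minv m T h t = mid m h t" for t
      using T(5) unfolding rows_identity_def by blast
    then have "mmult m (minv m T) (mmult m Y T) h q = (\<Sum>t\<in>{1..m}. mid m h t * mmult m Y T t q)"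
      unfolding mmult_def[of m "minv m T"] by simp
    also have "\<dots> = mmult m Y T h q"
      unfolding sum_mid_left
      using pivot_lowest[OF r P[unfolded PP_def] Y[unfolded PP_def] hl[unfolded PP_def]] by auto
    also have "\<dots> = 0" using hl old_row new_row q by blast
    finally show ?thesis .
  qed
  then show ?thesis unfolding rows_cleared_def by blast
qed

lemma rca_step_props:
  fixes m r :: nat and Y :: "('a::field) mtx" and Q :: "nat \<Rightarrow> (nat \<times> nat) set"
  defines "PP \<equiv> earlier Q r" and "T \<equiv> rca_T m r Y Q"
  assumes r: "1 \<le> r" and P: "pivot_set m r PP" and Y: "swept m r PP Y"
    and R: "rows_cleared m PP Y" and sY: "msupp m Y" and YY: "mmult m Y Y = mzero"
    and P': "pivot_set m (Suc r) (PP \<union> cand m r Y Q)"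
  shows "swept m (Suc r) (PP \<union> cand m r Y Q) (mmult m (mmult m (minv m T) Y) T)"
    "rows_cleared m (PP \<union> cand m r Y Q) (mmult m (mmult m (minv m T) Y) T)"
    "msupp m (mmult m (mmult m (minv m T) Y) T)"
    "mmult m (mmult m (mmult m (minv m T) Y) T) (mmult m (mmult m (minv m T) Y) T) = mzero"
proof -
  note T = rca_T_props[of m r Y Q, folded T_def]
  have assoc: "mmult m (mmult m (minv m T) Y) T = mmult m (minv m T) (mmult m Y T)"
    by (rule mmult_assoc)
  show "swept m (Suc r) (PP \<union> cand m r Y Q) (mmult m (mmult m (minv m T) Y) T)"
    unfolding assoc
    using swept_unitri_mult[OF T(2) P' swept_rca_product[OF r P[unfolded PP_def] Y[unfolded PP_def], folded PP_def T_def]] .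
  show "rows_cleared m (PP \<union> cand m r Y Q) (mmult m (mmult m (minv m T) Y) T)"
    unfolding assoc using rows_cleared_rca_step[OF r P[unfolded PP_def] Y[unfolded PP_def] R[unfolded PP_def] sY YY,
      folded PP_def T_def] .
  have sT: "msupp m T" "msupp m (minv m T)" using T(1,2) unfolding unitri_def by auto
  then show "msupp m (mmult m (mmult m (minv m T) Y) T)" using sY by (intro msupp_mult)
  have "mmult m (mmult m (mmult m (minv m T) Y) T) (mmult m (mmult m (minv m T) Y) T)
      = mmult m (minv m T) (mmult m Y (mmult m (mmult m T (minv m T)) (mmult m Y T)))"
    by (simp add: mmult_assoc)
  also have "\<dots> = mmult m (minv m T) (mmult m (mmult m Y Y) T)"
    using T(3) sY sT unfolding is_inverse_def by (simp add: mid_mult msupp_mult mmult_assoc)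
  also have "\<dots> = mzero" using YY by (simp add: mult_mzero_left mult_mzero_right)
  finally show "mmult m (mmult m (mmult m (minv m T) Y) T) (mmult m (mmult m (minv m T) Y) T) = mzero" .
qed

section \<open>Both algorithms run in lockstep\<close>

lemma isa_Suc: "1 \<le> r \<Longrightarrow> isa m D (Suc r) = isa_step m r (fst (isa m D r)) (snd (isa m D r))"
  by (cases r) (auto split: prod.splits)

lemma rca_Suc: "1 \<le> r \<Longrightarrow> rca m D (Suc r) = rca_step m r (fst (rca m D r)) (snd (rca m D r))"
  by (cases r) (auto split: prod.splits)

lemma isa_marks_Suc:
  "1 \<le> r \<Longrightarrow> snd (isa m D (Suc r)) = (snd (isa m D r))(r := isa_prim m r (fst (isa m D r)) (snd (isa m D r)))"
  using isa_Suc[of r m D] unfolding isa_step_def Let_def by simp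

lemma rca_marks_Suc:
  "1 \<le> r \<Longrightarrow> snd (rca m D (Suc r)) = (snd (rca m D r))(r := cand m r (fst (rca m D r)) (snd (rca m D r)))"
  using rca_Suc[of r m D] unfolding rca_step_def Let_def by simp

lemma conjugacy_step:
  fixes X Y U T T' :: "('a::field) mtx"
  assumes YU: "mmult m Y U = mmult m U X"
    and T: "is_inverse m T (minv m T)" and T': "is_inverse m T' (minv m T')"
    and s: "msupp m X" "msupp m U" "msupp m T"
  defines "U' \<equiv> mmult m (mmult m (minv m T') U) T"
  shows "mmult m (mmult m (mmult m (minv m T') Y) T') U' = mmult m U' (mmult m (mmult m (minv m T) X) T)"
proof -
  have "mmult m (mmult m (mmult m (minv m T') Y) T') U'
      = mmult m (minv m T') (mmult m Y (mmult m T' (mmult m (minv m T') (mmult m U T))))"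
    unfolding U'_def by (simp add: mmult_assoc)
  also have "\<dots> = mmult m (minv m T') (mmult m (mmult m Y U) T)"
    using is_inverse_cancel[OF T'] msupp_mult[OF s(2,3)] by (simp add: mmult_assoc)
  also have "\<dots> = mmult m (minv m T') (mmult m U (mmult m T (mmult m (minv m T) (mmult m X T))))"
    using is_inverse_cancel[OF T] msupp_mult[OF s(1,3)] YU by (simp add: mmult_assoc)
  also have "\<dots> = mmult m U' (mmult m (mmult m (minv m T) X) T)"
    unfolding U'_def by (simp add: mmult_assoc)
  finally show ?thesis .
qed

definition lockstep :: "nat \<Rightarrow> nat \<Rightarrow> (nat \<Rightarrow> (nat \<times> nat) set) \<Rightarrow> ('a::field) mtx \<Rightarrow> 'a mtx \<Rightarrow> bool" where
  "lockstep m r P X Y \<longleftrightarrow>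
     pivot_set m r (earlier P r) \<and> swept m r (earlier P r) X \<and> swept m r (earlier P r) Y \<and>
     rows_cleared m (earlier P r) Y \<and> msupp m X \<and> msupp m Y \<and> mmult m Y Y = mzero \<and>
     (\<exists>U. unitri m U \<and> mmult m Y U = mmult m U X)"

lemma lockstep_initial:
  fixes D :: "('a::field) mtx"
  assumes "msupp m D" "\<And>i j. j \<le> i \<Longrightarrow> D i j = 0" "mmult m D D = mzero"
  shows "lockstep m 1 (\<lambda>_. {}) D D"
proof -
  have "earlier (\<lambda>_. {}) 1 = {}" unfolding earlier_def by simp
  moreover have "swept m 1 {} D" unfolding swept_def using assms(2) by auto
  moreover have "mmult m D (mid m) = mmult m (mid m) D" using mid_mult[OF assms(1)] mult_mid[OF assms(1)] by simp
  ultimately show ?thesis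
    unfolding lockstep_def pivot_set_def rows_cleared_def using assms(1,3) unitri_mid by auto
qed

lemma lockstep_step:
  fixes X Y :: "('a::field) mtx"
  assumes r: "1 \<le> r" and L: "lockstep m r P X Y"
  defines "T \<equiv> isa_T m r X P" and "T' \<equiv> rca_T m r Y P"
  shows "isa_prim m r X P = cand m r Y P"
    and "lockstep m (Suc r) (P(r := isa_prim m r X P))
           (mmult m (mmult m (minv m T) X) T) (mmult m (mmult m (minv m T') Y) T')"
proof -
  have P: "pivot_set m r (earlier P r)" and X: "swept m r (earlier P r) X"
    and Y: "swept m r (earlier P r) Y" and R: "rows_cleared m (earlier P r) Y"
    and sX: "msupp m X" and sY: "msupp m Y" and YY: "mmult m Y Y = mzero"
    using L unfolding lockstep_def by blast+
  obtain U where U: "unitri m U" "mmult m Y U = mmult m U X" using L unfolding lockstep_def by blast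
  show same: "isa_prim m r X P = cand m r Y P" by (rule iteration_pivots_agree(1)[OF r P X Y R U])
  have earl: "earlier (P(r := isa_prim m r X P)) (Suc r) = earlier P r \<union> cand m r Y P"
    using earlier_Suc[OF r] same by simp
  have P': "pivot_set m (Suc r) (earlier P r \<union> cand m r Y P)"
    using pivot_set_isa_prim[OF r P, of X] same by simp
  note isa = isa_step_swept[OF r P X sX, folded T_def] and T = isa_T_props[OF r P, where X=X, folded T_def]
  note rca = rca_step_props[OF r P Y R sY YY P', folded T'_def] and T' = rca_T_props[of m r Y P, folded T'_def]
  have "unitri m (mmult m (mmult m (minv m T') U) T)"
    by (intro unitri_mult T'(2) U(1) T(1))
  moreover have "msupp m U" "msupp m T" using U(1) T(1) unfolding unitri_def by auto
  ultimately have "\<exists>U'. unitri m U' \<and> mmult m (mmult m (mmult m (minv m T') Y) T') U' =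
      mmult m U' (mmult m (mmult m (minv m T) X) T)"
    using conjugacy_step[OF U(2) T(3) T'(3) sX] by blast
  then show "lockstep m (Suc r) (P(r := isa_prim m r X P))
      (mmult m (mmult m (minv m T) X) T) (mmult m (mmult m (minv m T') Y) T')"
    unfolding lockstep_def earl using P' isa same rca by simp
qed

lemma connection_matrix_props:
  assumes "connection_matrix m D J b"
  shows "msupp m D" "\<And>i j. j \<le> i \<Longrightarrow> D i j = 0" "mmult m D D = mzero"
proof -
  have cover: "(\<Union>k\<in>{0..b}. J k) = {1..m}"
    and nz: "\<And>i j. D i j \<noteq> 0 \<Longrightarrow> i < j \<and> (\<exists>k\<in>{1..b}. i \<in> J (k - 1) \<and> j \<in> J k)"
    using assms unfolding connection_matrix_def by blast+
  show "mmult m D D = mzero" using assms unfolding connection_matrix_def by blast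
  show "D i j = 0" if "j \<le> i" for i j using nz[of i j] that by auto
  show "msupp m D"
    unfolding msupp_def
  proof (intro allI impI)
    fix a c assume ac: "\<not> (a \<in> {1..m} \<and> c \<in> {1..m})"
    show "D a c = 0"
    proof (rule ccontr)
      assume "D a c \<noteq> 0"
      then obtain k where "k \<in> {1..b}" "a \<in> J (k - 1)" "c \<in> J k" using nz by blast
      then have "a \<in> (\<Union>k\<in>{0..b}. J k)" "c \<in> (\<Union>k\<in>{0..b}. J k)" by (auto intro: bexI[of _ "k - 1"])
      then show False using ac cover by auto
    qed
  qed
qed

lemma algorithms_lockstep:
  fixes D :: "('a::field) mtx"
  assumes D: "connection_matrix m D J b"
  shows "1 \<le> r \<Longrightarrow> r \<le> m - 1 \<Longrightarrow>
    snd (rca m D r) = snd (isa m D r) \<and> lockstep m r (snd (isa m D r)) (fst (isa m D r)) (fst (rca m D r))"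
proof (induction r)
  case 0
  then show ?case by simp
next
  case (Suc r)
  show ?case
  proof (cases "r = 0")
    case True
    have "isa m D 1 = (D, \<lambda>_. {})" "rca m D 1 = (D, \<lambda>_. {})" by (simp_all add: One_nat_def)
    then show ?thesis using lockstep_initial[OF connection_matrix_props[OF D]] True by simp
  next
    case False
    then have r: "1 \<le> r" and rm: "r \<le> m - 2" using Suc.prems by arith+
    define X Y P where "X = fst (isa m D r)" and "Y = fst (rca m D r)" and "P = snd (isa m D r)"
    have same: "snd (rca m D r) = P" and L: "lockstep m r P X Y"
      using Suc r unfolding X_def Y_def P_def by auto
    have "isa m D (Suc r) = (mmult m (mmult m (minv m (isa_T m r X P)) X) (isa_T m r X P),
        P(r := isa_prim m r X P))"
      using isa_Suc[OF r, of m D] unfolding isa_step_def Let_def X_def P_def by simp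
    moreover have "rca m D (Suc r) = (mmult m (mmult m (minv m (rca_T m r Y P)) Y) (rca_T m r Y P),
        P(r := cand m r Y P))"
      using rca_Suc[OF r, of m D] rm same unfolding rca_step_def Let_def Y_def by simp
    ultimately show ?thesis using lockstep_step[OF r L] by (simp only: fst_conv snd_conv)
  qed
qed

theorem mainTheorem15:
  fixes m b :: nat and D :: "('a::field) mtx" and J :: "nat \<Rightarrow> nat set"
  assumes "m \<ge> 1"
    and "connection_matrix m D J b"
  shows "\<forall>r\<in>{1..m-1}.
           snd (isa m D (Suc r)) r = snd (rca m D (Suc r)) r \<and>
           (\<forall>i j. (i, j) \<in> (\<Union>k\<in>{1..r}. snd (isa m D (Suc r)) k) \<longrightarrow>
                   fst (isa m D r) i j = fst (rca m D r) i j)"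
proof
  fix r assume "r \<in> {1..m-1}"
  then have r: "1 \<le> r" and L: "snd (rca m D r) = snd (isa m D r) \<and>
      lockstep m r (snd (isa m D r)) (fst (isa m D r)) (fst (rca m D r))"
    using algorithms_lockstep[OF assms(2)] by auto
  define X Y P where "X = fst (isa m D r)" and "Y = fst (rca m D r)" and "P = snd (isa m D r)"
  obtain U where "pivot_set m r (earlier P r)" "swept m r (earlier P r) X" "swept m r (earlier P r) Y"
    "rows_cleared m (earlier P r) Y" "unitri m U" "mmult m Y U = mmult m U X"
    using L unfolding lockstep_def X_def Y_def P_def by blast
  note agree = iteration_pivots_agree[OF r this]
  have marks: "snd (isa m D (Suc r)) = P(r := isa_prim m r X P)"
    "snd (rca m D (Suc r)) = P(r := cand m r Y P)"
    using isa_marks_Suc[OF r, of m D] rca_marks_Suc[OF r, of m D] L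
    unfolding X_def Y_def P_def by simp_all
  show "snd (isa m D (Suc r)) r = snd (rca m D (Suc r)) r \<and>
      (\<forall>i j. (i, j) \<in> (\<Union>k\<in>{1..r}. snd (isa m D (Suc r)) k) \<longrightarrow>
              fst (isa m D r) i j = fst (rca m D r) i j)"
    unfolding marks pivots_upto_eq[OF r] using agree unfolding X_def Y_def by simp
qed

end
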